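(* Let $n\ge3$. The singular locus of the triangle space $\mathcal F_{3,n}$ consists exactly of the maximally degenerate triangles, i.e. the points $(p_1,p_2,p_3,l_1,l_2,l_3,P)$ with $p_1=p_2=p_3$ and $l_1=l_2=l_3$.
   Context: $\mathcal F_{3,n}$ is the variety of 7-tuples $(p_1,p_2,p_3,l_1,l_2,l_3,P)$ of points $p_i$, lines $l_j$ and a plane $P$ in $\mathbb P^{n-1}_{\mathbb C}$ such that $p_i\in l_j$ for all $i\neq j$ and $l_j\subset P$ for all $j$; it is a closed subvariety of $(\mathbb P^{n-1})^3\times\mathrm{Gr}(2,\mathbb C^n)^3\times\mathrm{Gr}(3,\mathbb C^n)$ and equals the closure of the $GL(n,\mathbb C)$-orbit of the coordinate triangle. *)

theory Defs
  imports "HOL-Analysis.Analysis" "HOL-Library.Numeral_Type"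
begin

text \<open>Points of Gr(k, C^n): complex-linear subspaces of complex^'n of complex dimension k.
  Projective space P^(n-1) is Gr 1.\<close>
definition Grass :: "nat \<Rightarrow> (complex^'n::finite) set set" where
  "Grass k = {V. vec.subspace V \<and> vec.dim V = k}"

type_synonym 'n triangle =
  "(complex^'n) set \<times> (complex^'n) set \<times> (complex^'n) set \<times>
   (complex^'n) set \<times> (complex^'n) set \<times> (complex^'n) set \<times> (complex^'n) set"

definition triangle_space :: "'n::finite triangle set" where
  "triangle_space = {(p1,p2,p3,l1,l2,l3,P).
     p1 \<in> Grass 1 \<and> p2 \<in> Grass 1 \<and> p3 \<in> Grass 1 \<and>
     l1 \<in> Grass 2 \<and> l2 \<in> Grass 2 \<and> l3 \<in> Grass 2 \<and> P \<in> Grass 3 \<and>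
     p2 \<subseteq> l1 \<and> p3 \<subseteq> l1 \<and> p1 \<subseteq> l2 \<and> p3 \<subseteq> l2 \<and> p1 \<subseteq> l3 \<and> p2 \<subseteq> l3 \<and>
     l1 \<subseteq> P \<and> l2 \<subseteq> P \<and> l3 \<subseteq> P}"

text \<open>Frames: 12-tuples of vectors (v1,v2,v3, a1,b1, a2,b2, a3,b3, c1,c2,c3), an element of the
  complex vector space E = (complex^'n)^12 (indices 0..11).\<close>
type_synonym 'n frame = "complex^'n^12"

definition cscale :: "complex \<Rightarrow> 'n::finite frame \<Rightarrow> 'n frame" where
  "cscale c x = (\<chi> i. c *s (x $ i))"

definition frame_dom :: "'n::finite frame set" where
  "frame_dom = {x. x$0 \<noteq> 0 \<and> x$1 \<noteq> 0 \<and> x$2 \<noteq> 0 \<and>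
     vec.independent {x$3, x$4} \<and> x$3 \<noteq> x$4 \<and>
     vec.independent {x$5, x$6} \<and> x$5 \<noteq> x$6 \<and>
     vec.independent {x$7, x$8} \<and> x$7 \<noteq> x$8 \<and>
     vec.independent {x$9, x$10, x$11} \<and> card {x$9, x$10, x$11} = 3}"

definition frame_proj :: "'n::finite frame \<Rightarrow> 'n triangle" where
  "frame_proj x = (vec.span {x$0}, vec.span {x$1}, vec.span {x$2},
     vec.span {x$3, x$4}, vec.span {x$5, x$6}, vec.span {x$7, x$8},
     vec.span {x$9, x$10, x$11})"

definition csubspace :: "'n::finite frame set \<Rightarrow> bool" where
  "csubspace T \<longleftrightarrow> 0 \<in> T \<and> (\<forall>x\<in>T. \<forall>y\<in>T. x + y \<in> T) \<and> (\<forall>c. \<forall>x\<in>T. cscale c x \<in> T)"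

definition holomorphic_map_on :: "('n::finite frame \<Rightarrow> 'n frame) \<Rightarrow> 'n frame set \<Rightarrow> bool" where
  "holomorphic_map_on h W \<longleftrightarrow> (\<forall>z\<in>W. \<exists>L. (h has_derivative L) (at z) \<and>
      (\<forall>c v. L (cscale c v) = cscale c (L v)))"

definition complex_submanifold_at :: "'n::finite frame set \<Rightarrow> 'n frame \<Rightarrow> bool" where
  "complex_submanifold_at S y \<longleftrightarrow> y \<in> S \<and>
     (\<exists>U W T T' h. open U \<and> y \<in> U \<and> open W \<and> csubspace T \<and> csubspace T' \<and>
        T \<inter> T' = {0} \<and> holomorphic_map_on h W \<and> (\<forall>t\<in>T \<inter> W. h t \<in> T') \<and>
        S \<inter> U = {t + h t | t. t \<in> T \<inter> W} \<inter> U)"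

text \<open>A point x of F_{3,n} is smooth iff the preimage of F_{3,n} in the frame space
  (a holomorphic principal bundle over the ambient product of Grassmannians) is a complex
  submanifold near some frame over x.\<close>
definition smooth_point :: "'n::finite triangle \<Rightarrow> bool" where
  "smooth_point x \<longleftrightarrow> (\<exists>y\<in>frame_dom. frame_proj y = x \<and>
     complex_submanifold_at {z \<in> frame_dom. frame_proj z \<in> triangle_space} y)"

definition singular_locus :: "'n::finite triangle set" where
  "singular_locus = {x \<in> triangle_space. \<not> smooth_point x}"

end

theory Submission
  imports Defs
begin

(* Near a non-degenerate triangle, fix three rows on which the plane of a frame over it has a
   nonzero minor. Every vector of a nearby frame over F_{3,n} is then recovered, by Cramer's rule,
   from these three rows, and the rows are holomorphic functions of free coordinates: if a vertex
   differs from the two others, those two move on the opposite side and the remaining sides pass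
   through them; if a side differs from the two others, the opposite vertices are its intersections
   with them. So the preimage of F_{3,n} in the frame space is locally a holomorphic graph.

   At a maximally degenerate triangle, a combination G of the determinants expressing that the
   vertices lie on the sides vanishes on the preimage and has no linear part at the frame, while its
   quadratic part does not vanish on the sum u + w of the directions of two lines contained in the
   preimage. In a complex submanifold u + w would be the velocity of a curve on which G vanishes,
   forcing the quadratic part to vanish at u + w. *)

section \<open>Holomorphic functions on the frame space\<close>

definition holo_on :: "'n::finite frame set \<Rightarrow> ('n frame \<Rightarrow> complex) \<Rightarrow> bool" where
  "holo_on W f \<longleftrightarrow> (\<forall>z\<in>W. \<exists>L. (f has_derivative L) (at z) \<and> (\<forall>c v. L (cscale c v) = c * L v))"

definition holo_vec_on :: "'n::finite frame set \<Rightarrow> ('n frame \<Rightarrow> complex^'n) \<Rightarrow> bool" where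
  "holo_vec_on W F \<longleftrightarrow> (\<forall>r. holo_on W (\<lambda>t. F t $ r))"

lemma cscale_nth [simp]: "cscale c x $ m $ r = c * x $ m $ r"
  by (simp add: cscale_def)

lemma holo_on_const [simp, intro]: "holo_on W (\<lambda>t. k)"
  unfolding holo_on_def by (auto intro!: exI[of _ "\<lambda>v. 0"])

lemma bounded_linear_frame_coord: "bounded_linear (\<lambda>t::'n::finite frame. t $ m $ r)"
  using bounded_linear_compose[OF bounded_linear_vec_nth[of r] bounded_linear_vec_nth[of m]] by (simp add: o_def)

lemma holo_on_coord [simp, intro]: "holo_on W (\<lambda>t. t $ m $ r)"
  unfolding holo_on_def
  by (auto intro!: exI[of _ "\<lambda>v. v $ m $ r"] bounded_linear.has_derivative[OF bounded_linear_frame_coord])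

lemma holo_on_add [intro]:
  assumes "holo_on W f" "holo_on W g"
  shows "holo_on W (\<lambda>t. f t + g t)"
  unfolding holo_on_def
proof
  fix z assume "z \<in> W"
  with assms obtain L M where "(f has_derivative L) (at z)" "\<forall>c v. L (cscale c v) = c * L v"
    "(g has_derivative M) (at z)" "\<forall>c v. M (cscale c v) = c * M v"
    unfolding holo_on_def by blast
  then show "\<exists>L. ((\<lambda>t. f t + g t) has_derivative L) (at z) \<and> (\<forall>c v. L (cscale c v) = c * L v)"
    by (intro exI[of _ "\<lambda>v. L v + M v"]) (auto intro: has_derivative_add simp: distrib_left)
qed

lemma holo_on_mult [intro]:
  assumes "holo_on W f" "holo_on W g"
  shows "holo_on W (\<lambda>t. f t * g t)"
  unfolding holo_on_def
proof
  fix z assume "z \<in> W"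
  with assms obtain L M where "(f has_derivative L) (at z)" "\<forall>c v. L (cscale c v) = c * L v"
    "(g has_derivative M) (at z)" "\<forall>c v. M (cscale c v) = c * M v"
    unfolding holo_on_def by blast
  then show "\<exists>L. ((\<lambda>t. f t * g t) has_derivative L) (at z) \<and> (\<forall>c v. L (cscale c v) = c * L v)"
    by (intro exI[of _ "\<lambda>v. f z * M v + L v * g z"] conjI has_derivative_mult) (auto simp: algebra_simps)
qed

lemma holo_on_inverse [intro]:
  assumes "holo_on W f" "\<And>t. t \<in> W \<Longrightarrow> f t \<noteq> 0"
  shows "holo_on W (\<lambda>t. inverse (f t))"
  unfolding holo_on_def
proof
  fix z assume "z \<in> W"
  with assms obtain L where L: "(f has_derivative L) (at z)" "\<forall>c v. L (cscale c v) = c * L v"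
    unfolding holo_on_def by blast
  have "((\<lambda>t. inverse (f t)) has_derivative (\<lambda>h. - (inverse (f z) * L h * inverse (f z)))) (at z)"
    using has_derivative_inverse[where f=f and x=z and S=UNIV and f'=L] L(1) assms(2) \<open>z \<in> W\<close> by simp
  with L(2) show "\<exists>L. ((\<lambda>t. inverse (f t)) has_derivative L) (at z) \<and> (\<forall>c v. L (cscale c v) = c * L v)"
    by (intro exI[of _ "\<lambda>h. - (inverse (f z) * L h * inverse (f z))"]) (auto simp: algebra_simps)
qed

lemma holo_on_uminus [intro]: "holo_on W f \<Longrightarrow> holo_on W (\<lambda>t. - f t)"
  using holo_on_mult[of W "\<lambda>t. -1" f] by simp

lemma holo_on_diff [intro]: "holo_on W f \<Longrightarrow> holo_on W g \<Longrightarrow> holo_on W (\<lambda>t. f t - g t)"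
  using holo_on_add[of W f "\<lambda>t. - g t"] by auto

lemma holo_on_divide [intro]:
  "holo_on W f \<Longrightarrow> holo_on W g \<Longrightarrow> (\<And>t. t \<in> W \<Longrightarrow> g t \<noteq> 0) \<Longrightarrow> holo_on W (\<lambda>t. f t / g t)"
  using holo_on_mult[of W f "\<lambda>t. inverse (g t)"] by (auto simp: divide_inverse)

lemma holo_on_if [intro]: "holo_on W f \<Longrightarrow> holo_on W g \<Longrightarrow> holo_on W (\<lambda>t. if c then f t else g t)"
  by (cases c) auto

lemma holo_on_subset: "holo_on W f \<Longrightarrow> V \<subseteq> W \<Longrightarrow> holo_on V f"
  unfolding holo_on_def by blast

lemma holo_on_imp_continuous_on: "holo_on W f \<Longrightarrow> continuous_on W f"
  unfolding holo_on_def by (meson continuous_at_imp_continuous_on has_derivative_continuous)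

lemma open_holo_nonzero:
  assumes "open A" "holo_on A f"
  shows "open {t \<in> A. f t \<noteq> 0}"
proof -
  have "open (A \<inter> f -` (- {0}))"
    using continuous_open_preimage[OF holo_on_imp_continuous_on] assms by blast
  then show ?thesis by (simp add: vimage_def Int_def)
qed

lemma holo_vec_on_coord [simp, intro]: "holo_vec_on W (\<lambda>t. t $ m)"
  unfolding holo_vec_on_def by simp

lemma holo_vec_on_const [simp, intro]: "holo_vec_on W (\<lambda>t. c)"
  unfolding holo_vec_on_def by simp

lemma holo_vec_on_if [intro]: "holo_vec_on W F \<Longrightarrow> holo_vec_on W G \<Longrightarrow> holo_vec_on W (\<lambda>t. if c then F t else G t)"
  by (cases c) auto

lemma holo_vec_on_scale [intro]: "holo_on W f \<Longrightarrow> holo_vec_on W F \<Longrightarrow> holo_vec_on W (\<lambda>t. f t *s F t)"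
  unfolding holo_vec_on_def by auto

lemma holo_vec_on_subset: "holo_vec_on W F \<Longrightarrow> V \<subseteq> W \<Longrightarrow> holo_vec_on V F"
  unfolding holo_vec_on_def using holo_on_subset by blast

lemma norm_axis: "norm (axis i x :: 'a::real_normed_vector ^ 'm::finite) = norm x"
proof -
  have "(\<Sum>j\<in>UNIV. (norm (axis i x $ j))\<^sup>2) = (\<Sum>j\<in>UNIV. if j = i then (norm x)\<^sup>2 else 0)"
    by (intro sum.cong) (auto simp: axis_def)
  then show ?thesis by (simp add: norm_vec_def L2_set_def)
qed

lemma bounded_linear_axis: "bounded_linear (axis i :: 'a::real_normed_vector \<Rightarrow> 'a ^ 'm::finite)"
proof (rule bounded_linear_intro[where K=1])
  show "axis i (x + y) = axis i x + axis i y" "axis i (r *\<^sub>R x) = r *\<^sub>R axis i x" for x y :: 'a and r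
    by (simp_all add: axis_def vec_eq_iff)
qed (simp add: norm_axis)

lemma sum_axis_nth: "(\<Sum>i\<in>UNIV. axis i (v $ i)) = v"
  by (simp add: vec_eq_iff sum_component axis_def)

lemma has_derivative_vec_lambda:
  fixes f :: "'a::real_normed_vector \<Rightarrow> 'b::real_normed_vector ^ 'm::finite"
  assumes "\<And>i. ((\<lambda>x. f x $ i) has_derivative (\<lambda>v. f' v $ i)) F"
  shows "(f has_derivative f') F"
proof -
  have "((\<lambda>x. \<Sum>i\<in>UNIV. axis i (f x $ i)) has_derivative (\<lambda>v. \<Sum>i\<in>UNIV. axis i (f' v $ i))) F"
    by (intro has_derivative_sum bounded_linear.has_derivative[OF bounded_linear_axis] assms)
  then show ?thesis by (simp add: sum_axis_nth)
qed

lemma holomorphic_map_onI: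
  assumes "\<And>m r. holo_on W (\<lambda>t. h t $ m $ r)"
  shows "holomorphic_map_on h W"
  unfolding holomorphic_map_on_def
proof
  fix z assume "z \<in> W"
  with assms have "\<forall>m r. \<exists>L. ((\<lambda>t. h t $ m $ r) has_derivative L) (at z) \<and> (\<forall>c v. L (cscale c v) = c * L v)"
    unfolding holo_on_def by blast
  then obtain L where L: "\<And>m r. ((\<lambda>t. h t $ m $ r) has_derivative L m r) (at z)"
      "\<And>m r c v. L m r (cscale c v) = c * L m r v"
    by metis
  have "(h has_derivative (\<lambda>v. \<chi> m r. L m r v)) (at z)"
    by (intro has_derivative_vec_lambda) (simp add: L)
  moreover have "(\<chi> m r. L m r (cscale c v)) = cscale c (\<chi> m r. L m r v)" for c v
    by (simp add: L vec_eq_iff)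
  ultimately show "\<exists>L. (h has_derivative L) (at z) \<and> (\<forall>c v. L (cscale c v) = cscale c (L v))"
    by blast
qed

section \<open>Graphs over coordinate subspaces\<close>

definition drop_coords :: "(12 \<times> 'n) set \<Rightarrow> 'n::finite frame \<Rightarrow> 'n frame" where
  "drop_coords D t = (\<chi> m r. if (m, r) \<in> D then 0 else t $ m $ r)"

lemma drop_coords_nth [simp]: "drop_coords D t $ m $ r = (if (m, r) \<in> D then 0 else t $ m $ r)"
  by (simp add: drop_coords_def)

lemma bounded_linear_drop_coords: "bounded_linear (drop_coords D)"
proof -
  have "linear (drop_coords D)" by (auto simp: linear_iff vec_eq_iff)
  then show ?thesis by (simp add: linear_conv_bounded_linear)
qed

lemma holo_on_compose_drop_coords:
  assumes "holo_on W f"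
  shows "holo_on (drop_coords D -` W) (\<lambda>t. f (drop_coords D t))"
  unfolding holo_on_def
proof
  fix z assume "z \<in> drop_coords D -` W"
  with assms obtain L where L: "(f has_derivative L) (at (drop_coords D z))" "\<forall>c v. L (cscale c v) = c * L v"
    unfolding holo_on_def by blast
  have "((\<lambda>t. f (drop_coords D t)) has_derivative (\<lambda>v. L (drop_coords D v))) (at z)"
    using diff_chain_at[OF bounded_linear.has_derivative[OF bounded_linear_drop_coords has_derivative_ident] L(1)]
    by (simp add: o_def)
  moreover have "drop_coords D (cscale c v) = cscale c (drop_coords D v)" for c v
    by (simp add: vec_eq_iff)
  ultimately show "\<exists>L. ((\<lambda>t. f (drop_coords D t)) has_derivative L) (at z) \<and> (\<forall>c v. L (cscale c v) = c * L v)"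
    using L(2) by (intro exI[of _ "\<lambda>v. L (drop_coords D v)"]) auto
qed

lemma open_drop_coords_vimage: "open W \<Longrightarrow> open (drop_coords D -` W)"
  by (intro continuous_open_vimage linear_continuous_at bounded_linear_drop_coords)

definition coord_subspace :: "(12 \<times> 'n) set \<Rightarrow> 'n::finite frame set" where
  "coord_subspace D = {t. \<forall>m r. (m, r) \<in> D \<longrightarrow> t $ m $ r = 0}"

lemma csubspace_coord_subspace: "csubspace (coord_subspace D)"
  unfolding csubspace_def coord_subspace_def by auto

lemma coord_subspace_Int_compl: "coord_subspace D \<inter> coord_subspace (- D) = {0}"
  unfolding coord_subspace_def by (auto simp: vec_eq_iff) meson

lemma drop_coords_in_coord_subspace: "drop_coords D t \<in> coord_subspace D"
  by (simp add: coord_subspace_def)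

lemma drop_coords_id: "t \<in> coord_subspace D \<Longrightarrow> drop_coords D t = t"
  unfolding coord_subspace_def by (auto simp: vec_eq_iff)

lemma complex_submanifold_at_coordinate_graph:
  fixes S :: "'n::finite frame set" and R :: "'n frame \<Rightarrow> 'n frame"
  assumes W: "open W" and holo: "\<And>m r. holo_on W (\<lambda>t. R t $ m $ r)"
    and free: "\<And>t m r. t \<in> W \<Longrightarrow> (m, r) \<notin> D \<Longrightarrow> R t $ m $ r = t $ m $ r"
    and U: "open U" "y \<in> U" "\<And>z. z \<in> U \<Longrightarrow> drop_coords D z \<in> W"
    and S: "\<And>z. z \<in> U \<Longrightarrow> z \<in> S \<longleftrightarrow> z = R (drop_coords D z)"
    and y: "y \<in> S"
  shows "complex_submanifold_at S y"
proof -
  define T where "T = coord_subspace D"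
  define h where "h t = R (drop_coords D t) - t" for t
  have holo_h: "holomorphic_map_on h (drop_coords D -` W)"
    unfolding h_def by (rule holomorphic_map_onI) (auto intro!: holo_on_compose_drop_coords holo)
  have h_range: "\<forall>t\<in>T \<inter> drop_coords D -` W. h t \<in> coord_subspace (- D)"
  proof
    fix t assume "t \<in> T \<inter> drop_coords D -` W"
    then have "drop_coords D t = t" "t \<in> W" using drop_coords_id[of t D] unfolding T_def by auto
    then show "h t \<in> coord_subspace (- D)" using free[of t] unfolding coord_subspace_def h_def by simp
  qed
  have graph: "S \<inter> U = {t + h t | t. t \<in> T \<inter> drop_coords D -` W} \<inter> U"
  proof (intro equalityI subsetI)
    fix z assume z: "z \<in> S \<inter> U"
    have idem: "drop_coords D (drop_coords D z) = drop_coords D z"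
      by (rule drop_coords_id[OF drop_coords_in_coord_subspace])
    then have "z = drop_coords D z + h (drop_coords D z)" using S[of z] z unfolding h_def by simp
    moreover have "drop_coords D z \<in> T \<inter> drop_coords D -` W"
      using U(3)[of z] z drop_coords_in_coord_subspace[of D z] idem
      unfolding T_def by auto
    ultimately show "z \<in> {t + h t | t. t \<in> T \<inter> drop_coords D -` W} \<inter> U" using z by blast
  next
    fix z assume "z \<in> {t + h t | t. t \<in> T \<inter> drop_coords D -` W} \<inter> U"
    then obtain t where t: "t \<in> T" "t \<in> W" "z = R t" "z \<in> U"
      unfolding h_def T_def using drop_coords_id by fastforce
    then have "drop_coords D z = t"
      using free[of t] unfolding T_def coord_subspace_def by (auto simp: vec_eq_iff)
    with S[of z] t show "z \<in> S \<inter> U" by auto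
  qed
  show ?thesis
    unfolding complex_submanifold_at_def
    apply (rule conjI[OF y])
    apply (rule exI[where x=U], rule exI[where x="drop_coords D -` W"], rule exI[where x=T],
        rule exI[where x="coord_subspace (- D)"], rule exI[where x=h])
    using U(1,2) open_drop_coords_vimage[OF W] csubspace_coord_subspace coord_subspace_Int_compl
      holo_h h_range graph unfolding T_def
    by blast
qed

section \<open>Linear algebra in \<open>\<complex>\<^sup>n\<close>\<close>

definition indep2 :: "complex^'n::finite \<Rightarrow> complex^'n \<Rightarrow> bool" where
  "indep2 a b \<longleftrightarrow> (\<forall>\<alpha> \<beta>. \<alpha> *s a + \<beta> *s b = 0 \<longrightarrow> \<alpha> = 0 \<and> \<beta> = 0)"

definition indep3 :: "complex^'n::finite \<Rightarrow> complex^'n \<Rightarrow> complex^'n \<Rightarrow> bool" where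
  "indep3 a b c \<longleftrightarrow> (\<forall>\<alpha> \<beta> \<gamma>. \<alpha> *s a + \<beta> *s b + \<gamma> *s c = 0 \<longrightarrow> \<alpha> = 0 \<and> \<beta> = 0 \<and> \<gamma> = 0)"

abbreviation span2 :: "complex^'n::finite \<Rightarrow> complex^'n \<Rightarrow> (complex^'n) set" where
  "span2 a b \<equiv> vec.span {a, b}"

abbreviation span3 :: "complex^'n::finite \<Rightarrow> complex^'n \<Rightarrow> complex^'n \<Rightarrow> (complex^'n) set" where
  "span3 a b c \<equiv> vec.span {a, b, c}"

lemma span_singleton_iff: "x \<in> vec.span {a} \<longleftrightarrow> (\<exists>\<alpha>. x = \<alpha> *s a)"
  by (auto simp: vec.span_singleton)

lemma span2_iff: "x \<in> span2 a b \<longleftrightarrow> (\<exists>\<alpha> \<beta>. x = \<alpha> *s a + \<beta> *s b)"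
proof
  assume "x \<in> span2 a b"
  then obtain k where "x - k *s a \<in> vec.span {b}" unfolding vec.span_insert[of a "{b}"] by blast
  then obtain m where "x - k *s a = m *s b" by (auto simp: vec.span_singleton)
  then have "x = k *s a + m *s b" by (simp add: algebra_simps)
  then show "\<exists>\<alpha> \<beta>. x = \<alpha> *s a + \<beta> *s b" by blast
next
  assume "\<exists>\<alpha> \<beta>. x = \<alpha> *s a + \<beta> *s b"
  then obtain \<alpha> \<beta> where "x = \<alpha> *s a + \<beta> *s b" by blast
  then have "x - \<alpha> *s a \<in> vec.span {b}" by (auto simp: vec.span_singleton)
  then show "x \<in> span2 a b" unfolding vec.span_insert[of a "{b}"] by blast
qed

lemma span3_iff: "x \<in> span3 a b c \<longleftrightarrow> (\<exists>\<alpha> \<beta> \<gamma>. x = \<alpha> *s a + \<beta> *s b + \<gamma> *s c)"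
proof
  assume "x \<in> span3 a b c"
  then obtain k where "x - k *s a \<in> span2 b c" unfolding vec.span_insert[of a "{b, c}"] by blast
  then obtain m n where "x - k *s a = m *s b + n *s c" by (auto simp: span2_iff)
  then have "x = k *s a + m *s b + n *s c" by (simp add: algebra_simps)
  then show "\<exists>\<alpha> \<beta> \<gamma>. x = \<alpha> *s a + \<beta> *s b + \<gamma> *s c" by blast
next
  assume "\<exists>\<alpha> \<beta> \<gamma>. x = \<alpha> *s a + \<beta> *s b + \<gamma> *s c"
  then obtain \<alpha> \<beta> \<gamma> where "x = \<alpha> *s a + \<beta> *s b + \<gamma> *s c" by blast
  then have "x - \<alpha> *s a \<in> span2 b c" by (auto simp: span2_iff algebra_simps)
  then show "x \<in> span3 a b c" unfolding vec.span_insert[of a "{b, c}"] by blast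
qed

lemma span3_lincomb: "a \<in> span3 c1 c2 c3 \<Longrightarrow> b \<in> span3 c1 c2 c3 \<Longrightarrow> \<alpha> *s a + \<beta> *s b \<in> span3 c1 c2 c3"
  by (simp add: vec.span_add vec.span_scale)

lemma span2_subset_span3: "a \<in> span3 c1 c2 c3 \<Longrightarrow> b \<in> span3 c1 c2 c3 \<Longrightarrow> x \<in> span2 a b \<Longrightarrow> x \<in> span3 c1 c2 c3"
  by (auto simp: span2_iff span3_lincomb)

lemma span_subset_subspace_iff: "vec.subspace X \<Longrightarrow> vec.span B \<subseteq> X \<longleftrightarrow> B \<subseteq> X"
  by (meson vec.span_minimal vec.span_superset subset_trans)

lemma indep2_iff_independent: "indep2 a b \<longleftrightarrow> vec.independent {a, b} \<and> a \<noteq> b"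
proof
  assume H: "indep2 a b"
  have ab: "a \<noteq> b"
  proof
    assume "a = b" then have "1 *s a + (-1) *s b = 0" by (simp add: vec_eq_iff)
    then show False using H[unfolded indep2_def, rule_format, of 1 "-1"] by simp
  qed
  have "vec.independent {a, b}"
    unfolding vec.independent_explicit
  proof (intro conjI allI impI ballI)
    fix c v
    assume "(\<Sum>v\<in>{a, b}. c v *s v) = 0" "v \<in> {a, b}"
    then show "c v = 0" using H ab unfolding indep2_def by auto
  qed simp
  then show "vec.independent {a, b} \<and> a \<noteq> b" using ab by blast
next
  assume H: "vec.independent {a, b} \<and> a \<noteq> b"
  show "indep2 a b" unfolding indep2_def
  proof (intro allI impI)
    fix \<alpha> \<beta> assume E: "\<alpha> *s a + \<beta> *s b = 0"
    define c where "c v = (if v = a then \<alpha> else \<beta>)" for v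
    have "b \<noteq> a" using H by auto
    then have "(\<Sum>v\<in>{a, b}. c v *s v) = \<alpha> *s a + \<beta> *s b" by (simp add: c_def)
    then have "(\<Sum>v\<in>{a, b}. c v *s v) = 0" using E by simp
    then have "c a = 0" "c b = 0" using H unfolding vec.independent_explicit by blast+
    then show "\<alpha> = 0 \<and> \<beta> = 0" using H by (simp add: c_def split: if_splits)
  qed
qed

lemma indep3_iff_independent: "indep3 a b c \<longleftrightarrow> vec.independent {a, b, c} \<and> card {a, b, c} = 3"
proof
  assume H: "indep3 a b c"
  have d: "a \<noteq> b" "a \<noteq> c" "b \<noteq> c"
    using H[unfolded indep3_def, rule_format, of 1 "-1" 0] H[unfolded indep3_def, rule_format, of 1 0 "-1"]
      H[unfolded indep3_def, rule_format, of 0 1 "-1"]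
    by (auto simp: vec_eq_iff)
  have "vec.independent {a, b, c}"
    unfolding vec.independent_explicit
  proof (intro conjI allI impI ballI)
    fix f v
    assume "(\<Sum>v\<in>{a, b, c}. f v *s v) = 0" "v \<in> {a, b, c}"
    then show "f v = 0" using H d unfolding indep3_def by (auto simp: add.assoc)
  qed simp
  then show "vec.independent {a, b, c} \<and> card {a, b, c} = 3" using d by auto
next
  assume H: "vec.independent {a, b, c} \<and> card {a, b, c} = 3"
  then have d: "a \<noteq> b" "a \<noteq> c" "b \<noteq> c"
    by (auto simp: card_insert_if split: if_splits)
  show "indep3 a b c" unfolding indep3_def
  proof (intro allI impI)
    fix \<alpha> \<beta> \<gamma> assume E: "\<alpha> *s a + \<beta> *s b + \<gamma> *s c = 0"
    define f where "f v = (if v = a then \<alpha> else if v = b then \<beta> else \<gamma>)" for v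
    have "(\<Sum>v\<in>{a, b, c}. f v *s v) = 0" using E d by (simp add: f_def add.assoc)
    then have "f a = 0" "f b = 0" "f c = 0" using H unfolding vec.independent_explicit by blast+
    then show "\<alpha> = 0 \<and> \<beta> = 0 \<and> \<gamma> = 0" using d by (simp add: f_def split: if_splits)
  qed
qed

lemma indep2_commute: "indep2 a b \<Longrightarrow> indep2 b a"
  unfolding indep2_def by (metis add.commute)

lemma indep2_nonzero: assumes "indep2 a b" shows "a \<noteq> 0 \<and> b \<noteq> 0"
  using assms[unfolded indep2_def, rule_format, of 1 0] assms[unfolded indep2_def, rule_format, of 0 1]
  by auto

lemma indep3_imp_indep2: "indep3 x a b \<Longrightarrow> indep2 a b"
  unfolding indep3_def indep2_def by (metis add_0 vector_smult_lzero)

lemma indep2_of_span_singleton_neq: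
  assumes v: "v \<noteq> 0" and w: "w \<noteq> 0" and ne: "vec.span {v} \<noteq> vec.span {w}"
  shows "indep2 v w"
  unfolding indep2_def
proof (intro allI impI)
  fix \<alpha> \<beta> assume H: "\<alpha> *s v + \<beta> *s w = 0"
  show "\<alpha> = 0 \<and> \<beta> = 0"
  proof (rule ccontr)
    assume nt: "\<not> (\<alpha> = 0 \<and> \<beta> = 0)"
    have b: "\<beta> \<noteq> 0"
    proof
      assume "\<beta> = 0" then have "\<alpha> *s v = 0" using H by simp
      then show False using nt \<open>\<beta> = 0\<close> v by (simp add: vec_eq_iff)
    qed
    have a: "\<alpha> \<noteq> 0"
    proof
      assume "\<alpha> = 0" then have "\<beta> *s w = 0" using H by simp
      then show False using b w by (simp add: vec_eq_iff)
    qed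
    have Hc: "\<alpha> * v$i + \<beta> * w$i = 0" for i using arg_cong[OF H, of "\<lambda>x. x$i"] by simp
    have Hw: "\<beta> * w$i = - (\<alpha> * v$i)" for i using Hc[of i] by (simp add: eq_neg_iff_add_eq_0 add.commute)
    have Hv: "\<alpha> * v$i = - (\<beta> * w$i)" for i using Hc[of i] by (simp add: eq_neg_iff_add_eq_0)
    have wv: "w = (- \<alpha> / \<beta>) *s v"
    proof -
      have "w$i = (- \<alpha> / \<beta>) * v$i" for i using Hw[of i] b by (simp add: field_simps)
      then show ?thesis by (simp add: vec_eq_iff)
    qed
    have vw: "v = (- \<beta> / \<alpha>) *s w"
    proof -
      have "v$i = (- \<beta> / \<alpha>) * w$i" for i using Hv[of i] a by (simp add: field_simps)
      then show ?thesis by (simp add: vec_eq_iff)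
    qed
    have "w \<in> vec.span {v}" using wv unfolding span_singleton_iff by blast
    then have "vec.span {w} \<subseteq> vec.span {v}" using span_subset_subspace_iff[of "vec.span {v}" "{w}"] by simp
    moreover have "v \<in> vec.span {w}" using vw unfolding span_singleton_iff by blast
    then have "vec.span {v} \<subseteq> vec.span {w}" using span_subset_subspace_iff[of "vec.span {w}" "{v}"] by simp
    ultimately show False using ne by blast
  qed
qed

lemma indep2_exchange:
  assumes "x \<in> span2 a b" "x \<noteq> 0" "indep2 a b"
  shows "indep2 b x \<or> indep2 a x"
proof -
  obtain \<alpha> \<beta> where x: "x = \<alpha> *s a + \<beta> *s b" using assms(1) unfolding span2_iff by blast
  have ab: "\<And>c d. c *s a + d *s b = 0 \<Longrightarrow> c = 0 \<and> d = 0" using assms(3) unfolding indep2_def by blast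
  show ?thesis
  proof (cases "\<beta> = 0")
    case True
    with x assms(2) have "\<alpha> \<noteq> 0" by auto
    have "indep2 b x" unfolding indep2_def
    proof (intro allI impI)
      fix c d assume "c *s b + d *s x = 0"
      then have "(d * \<alpha>) *s a + c *s b = 0" using True x by (simp add: vec_eq_iff algebra_simps)
      then show "c = 0 \<and> d = 0" using ab \<open>\<alpha> \<noteq> 0\<close> by fastforce
    qed
    then show ?thesis by blast
  next
    case False
    have "indep2 a x" unfolding indep2_def
    proof (intro allI impI)
      fix c d assume "c *s a + d *s x = 0"
      then have "(c + d * \<alpha>) *s a + (d * \<beta>) *s b = 0" using x by (simp add: vec_eq_iff algebra_simps)
      then show "c = 0 \<and> d = 0" using ab False by fastforce
    qed
    then show ?thesis by blast
  qed
qed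

lemma span2_basis_exchange:
  assumes "a \<in> span2 x y" "b \<in> span2 x y" "indep2 a b"
  shows "x \<in> span2 a b \<and> y \<in> span2 a b"
proof -
  obtain p q where a: "a = p *s x + q *s y" using assms(1) by (auto simp: span2_iff)
  obtain r t where b: "b = r *s x + t *s y" using assms(2) by (auto simp: span2_iff)
  define \<delta> where "\<delta> = p*t - q*r"
  have ab: "\<And>\<alpha> \<beta>. \<alpha> *s a + \<beta> *s b = 0 \<Longrightarrow> \<alpha> = 0 \<and> \<beta> = 0" using assms(3) unfolding indep2_def by blast
  have "\<delta> \<noteq> 0"
  proof
    assume "\<delta> = 0"
    then have "t *s a + (- q) *s b = 0" "r *s a + (- p) *s b = 0"
      by (simp_all add: a b \<delta>_def vec_eq_iff algebra_simps)
    then have "p = 0 \<and> q = 0" using ab by fastforce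
    then show False using ab[of 1 0] a by simp
  qed
  have "x = (t/\<delta>) *s a + (- q/\<delta>) *s b"
  proof -
    have "t * a$i - q * b$i = \<delta> * x$i" for i unfolding a b \<delta>_def by (simp add: algebra_simps)
    then show ?thesis using \<open>\<delta> \<noteq> 0\<close> by (simp add: vec_eq_iff field_simps)
  qed
  moreover have "y = (- r/\<delta>) *s a + (p/\<delta>) *s b"
  proof -
    have "p * b$i - r * a$i = \<delta> * y$i" for i unfolding a b \<delta>_def by (simp add: algebra_simps)
    then show ?thesis using \<open>\<delta> \<noteq> 0\<close> by (simp add: vec_eq_iff field_simps)
  qed
  ultimately show ?thesis unfolding span2_iff by blast
qed

lemma Grass_1_span: "v \<noteq> 0 \<Longrightarrow> vec.span {v} \<in> Grass 1"
  unfolding Grass_def using vec.dim_span_eq_card_independent[of "{v}"] vec.independent_insertI[of v "{}"]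
  by simp

lemma Grass_2_span: "indep2 a b \<Longrightarrow> span2 a b \<in> Grass 2"
  unfolding Grass_def indep2_iff_independent using vec.dim_span_eq_card_independent[of "{a,b}"] by simp

lemma Grass_3_span: "indep3 a b c \<Longrightarrow> span3 a b c \<in> Grass 3"
  unfolding Grass_def indep3_iff_independent using vec.dim_span_eq_card_independent[of "{a,b,c}"] by simp

lemma Grass_obtain_basis:
  assumes "V \<in> Grass k"
  obtains B where "vec.independent B" "card B = k" "V = vec.span B"
proof -
  have sub: "vec.subspace V" and d: "vec.dim V = k" using assms by (auto simp: Grass_def)
  obtain B where "B \<subseteq> V" "vec.independent B" "V \<subseteq> vec.span B" "card B = vec.dim V"
    using vec.basis_exists by blast
  moreover then have "vec.span B = V" using vec.span_subspace sub by blast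
  ultimately show ?thesis using that d by auto
qed

lemma Grass_1_E:
  assumes "p \<in> Grass 1" obtains v where "v \<noteq> 0" "p = vec.span {v}"
proof -
  obtain B where B: "vec.independent B" "card B = 1" "p = vec.span B" using Grass_obtain_basis[OF assms] .
  then obtain v where "B = {v}" by (meson card_1_singletonE)
  then show ?thesis using that B vec.dependent_zero by auto
qed

lemma Grass_2_E:
  assumes "l \<in> Grass 2" obtains a b where "indep2 a b" "l = span2 a b"
proof -
  obtain B where B: "vec.independent B" "card B = 2" "l = vec.span B" using Grass_obtain_basis[OF assms] .
  then obtain a b where "B = {a, b}" "a \<noteq> b" by (meson card_2_iff)
  then show ?thesis using that B by (auto simp: indep2_iff_independent)
qed

lemma Grass_3_E:
  assumes "P \<in> Grass 3" obtains a b c where "indep3 a b c" "P = span3 a b c"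
proof -
  obtain B where B: "vec.independent B" "card B = 3" "P = vec.span B" using Grass_obtain_basis[OF assms] .
  then obtain a b c where "B = {a, b, c}" by (metis card_3_iff)
  then show ?thesis using that B by (auto simp: indep3_iff_independent)
qed

section \<open>Minors on three rows\<close>

text \<open>Once a basis of the plane has a nonzero minor on the rows \<open>p, q, s\<close>, every computation inside
  the plane can be done on these three rows; \<open>det3\<close>, \<open>cross3\<close> and \<open>dot3\<close> are the usual operations
  of \<open>\<complex>\<^sup>3\<close> applied to the rows \<open>p, q, s\<close>.\<close>

definition minor2 :: "'n::finite \<Rightarrow> 'n \<Rightarrow> complex^'n \<Rightarrow> complex^'n \<Rightarrow> complex" where
  "minor2 q s y z = y$q * z$s - y$s * z$q"

definition det3 :: "'n::finite \<Rightarrow> 'n \<Rightarrow> 'n \<Rightarrow> complex^'n \<Rightarrow> complex^'n \<Rightarrow> complex^'n \<Rightarrow> complex" where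
  "det3 p q s x y z = x$p * minor2 q s y z + x$q * minor2 s p y z + x$s * minor2 p q y z"

definition cross3 :: "'n::finite \<Rightarrow> 'n \<Rightarrow> 'n \<Rightarrow> complex^'n \<Rightarrow> complex^'n \<Rightarrow> complex^'n" where
  "cross3 p q s y z = (\<chi> r. if r = p then minor2 q s y z else if r = q then minor2 s p y z
     else if r = s then minor2 p q y z else 0)"

definition dot3 :: "'n::finite \<Rightarrow> 'n \<Rightarrow> 'n \<Rightarrow> complex^'n \<Rightarrow> complex^'n \<Rightarrow> complex" where
  "dot3 p q s x y = x$p * y$p + x$q * y$q + x$s * y$s"

definition rows_agree :: "'n::finite \<Rightarrow> 'n \<Rightarrow> 'n \<Rightarrow> complex^'n \<Rightarrow> complex^'n \<Rightarrow> bool" where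
  "rows_agree p q s x y \<longleftrightarrow> x$p = y$p \<and> x$q = y$q \<and> x$s = y$s"

text \<open>Cramer's rule: the vector of \<open>span3 c1 c2 c3\<close> with the same rows \<open>p, q, s\<close> as \<open>x\<close>.\<close>
definition plane_lift :: "'n::finite \<Rightarrow> 'n \<Rightarrow> 'n \<Rightarrow> complex^'n \<Rightarrow> complex^'n \<Rightarrow> complex^'n \<Rightarrow>
    complex^'n \<Rightarrow> complex^'n" where
  "plane_lift p q s c1 c2 c3 x =
     (det3 p q s x c2 c3 / det3 p q s c1 c2 c3) *s c1 + (det3 p q s c1 x c3 / det3 p q s c1 c2 c3) *s c2
     + (det3 p q s c1 c2 x / det3 p q s c1 c2 c3) *s c3"

text \<open>Changes row \<open>p\<close> of \<open>x\<close> so that \<open>x\<close> lies in the plane of \<open>y\<close> and \<open>z\<close> (on the rows \<open>p, q, s\<close>).\<close>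
definition solve_row :: "'n::finite \<Rightarrow> 'n \<Rightarrow> 'n \<Rightarrow> complex^'n \<Rightarrow> complex^'n \<Rightarrow> complex^'n \<Rightarrow> complex^'n" where
  "solve_row p q s x y z =
     (\<chi> r. if r = p then - (x$q * minor2 s p y z + x$s * minor2 p q y z) / minor2 q s y z else x$r)"

definition cyclic3 :: "'n \<Rightarrow> 'n \<Rightarrow> 'n \<Rightarrow> 'n \<Rightarrow> 'n \<Rightarrow> 'n \<Rightarrow> bool" where
  "cyclic3 p q s p' q' s' \<longleftrightarrow> (p', q', s') = (p, q, s) \<or> (p', q', s') = (q, s, p) \<or> (p', q', s') = (s, p, q)"

lemma det3_rotate_rows: "det3 p q s x y z = det3 q s p x y z"
  unfolding det3_def minor2_def by (simp add: algebra_simps)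

lemma det3_rotate_args: "det3 p q s x y z = det3 p q s y z x"
  unfolding det3_def minor2_def by (simp add: algebra_simps)

lemma det3_swap12: "det3 p q s x y z = - det3 p q s y x z"
  unfolding det3_def minor2_def by (simp add: algebra_simps)

lemma det3_swap23: "det3 p q s x y z = - det3 p q s x z y"
  unfolding det3_def minor2_def by (simp add: algebra_simps)

lemma det3_add1: "det3 p q s (a + b) y z = det3 p q s a y z + det3 p q s b y z"
  and det3_add2: "det3 p q s x (a + b) z = det3 p q s x a z + det3 p q s x b z"
  and det3_add3: "det3 p q s x y (a + b) = det3 p q s x y a + det3 p q s x y b"
  and det3_scale1: "det3 p q s (k *s x) y z = k * det3 p q s x y z"
  and det3_scale2: "det3 p q s x (k *s y) z = k * det3 p q s x y z"
  and det3_scale3: "det3 p q s x y (k *s z) = k * det3 p q s x y z"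
  and det3_diff1: "det3 p q s (a - b) y z = det3 p q s a y z - det3 p q s b y z"
  and det3_diff2: "det3 p q s x (a - b) z = det3 p q s x a z - det3 p q s x b z"
  and det3_diff3: "det3 p q s x y (a - b) = det3 p q s x y a - det3 p q s x y b"
  and det3_uminus1: "det3 p q s (- x) y z = - det3 p q s x y z"
  and det3_uminus2: "det3 p q s x (- y) z = - det3 p q s x y z"
  and det3_uminus3: "det3 p q s x y (- z) = - det3 p q s x y z"
  by (simp_all add: det3_def minor2_def algebra_simps)

lemmas det3_multilinear = det3_add1 det3_add2 det3_add3 det3_scale1 det3_scale2 det3_scale3
  det3_diff1 det3_diff2 det3_diff3 det3_uminus1 det3_uminus2 det3_uminus3

lemma det3_same12 [simp]: "det3 p q s x x z = 0"
  and det3_same13 [simp]: "det3 p q s x y x = 0"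
  and det3_same23 [simp]: "det3 p q s x y y = 0"
  by (simp_all add: det3_def minor2_def algebra_simps)

lemma det3_zero1 [simp]: "det3 p q s 0 y z = 0"
  and det3_zero2 [simp]: "det3 p q s x 0 z = 0"
  and det3_zero3 [simp]: "det3 p q s x y 0 = 0"
  by (simp_all add: det3_def minor2_def)

lemma det3_expand:
  "det3 p q s (x + dx) (a + da) (b + db) = det3 p q s x a b
     + (det3 p q s dx a b + det3 p q s x da b + det3 p q s x a db)
     + (det3 p q s dx da b + det3 p q s dx a db + det3 p q s x da db) + det3 p q s dx da db"
  by (simp add: det3_multilinear)

lemma det3_basis_change:
  assumes "a' \<in> span2 a b" "b' \<in> span2 a b" "indep2 a' b'"
  obtains \<mu> where "\<mu> \<noteq> 0" "\<And>p q s x. det3 p q s x a' b' = \<mu> * det3 p q s x a b"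
proof -
  obtain \<alpha> \<beta> where a': "a' = \<alpha> *s a + \<beta> *s b" using assms(1) by (auto simp: span2_iff)
  obtain \<gamma> \<delta> where b': "b' = \<gamma> *s a + \<delta> *s b" using assms(2) by (auto simp: span2_iff)
  have i: "\<And>c d. c *s a' + d *s b' = 0 \<Longrightarrow> c = 0 \<and> d = 0" using assms(3) unfolding indep2_def by blast
  have "\<alpha> * \<delta> - \<beta> * \<gamma> \<noteq> 0"
  proof
    assume "\<alpha> * \<delta> - \<beta> * \<gamma> = 0"
    then have "\<delta> *s a' + (- \<beta>) *s b' = 0" "\<gamma> *s a' + (- \<alpha>) *s b' = 0"
      by (simp_all add: a' b' vec_eq_iff algebra_simps)
    then have "\<alpha> = 0 \<and> \<beta> = 0" using i by fastforce
    then show False using i[of 1 0] a' by simp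
  qed
  moreover have "det3 p q s x a' b' = (\<alpha> * \<delta> - \<beta> * \<gamma>) * det3 p q s x a b" for p q s x
    using det3_swap23[of p q s x b a] by (simp add: a' b' det3_multilinear algebra_simps)
  ultimately show ?thesis using that by blast
qed

lemma det3_nonzero_distinct: "det3 p q s x y z \<noteq> 0 \<Longrightarrow> p \<noteq> q \<and> p \<noteq> s \<and> q \<noteq> s"
  unfolding det3_def minor2_def by (auto simp: algebra_simps)

lemma rows_agree_refl [simp]: "rows_agree p q s x x"
  and rows_agree_sym: "rows_agree p q s x y \<Longrightarrow> rows_agree p q s y x"
  and rows_agree_trans: "rows_agree p q s x y \<Longrightarrow> rows_agree p q s y z \<Longrightarrow> rows_agree p q s x z"
  unfolding rows_agree_def by auto

lemma det3_rows_agree: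
  "rows_agree p q s x x' \<Longrightarrow> rows_agree p q s y y' \<Longrightarrow> rows_agree p q s z z' \<Longrightarrow> det3 p q s x y z = det3 p q s x' y' z'"
  unfolding rows_agree_def det3_def minor2_def by simp

lemma minor2_rows_agree: "rows_agree p q s y y' \<Longrightarrow> rows_agree p q s z z' \<Longrightarrow> minor2 q s y z = minor2 q s y' z'"
  unfolding rows_agree_def minor2_def by simp

lemma det3_span2_zero: "x \<in> span2 a b \<Longrightarrow> det3 p q s x a b = 0"
  by (auto simp: span2_iff det3_multilinear det3_rotate_args[of p q s a])

lemma indep3_of_det3_nonzero: "det3 p q s x y z \<noteq> 0 \<Longrightarrow> indep3 x y z"
  unfolding indep3_def
proof (intro allI impI)
  fix \<alpha> \<beta> \<gamma> assume d: "det3 p q s x y z \<noteq> 0" and E: "\<alpha> *s x + \<beta> *s y + \<gamma> *s z = 0"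
  have "\<alpha> * det3 p q s x y z = det3 p q s (\<alpha> *s x + \<beta> *s y + \<gamma> *s z) y z"
    "\<beta> * det3 p q s x y z = det3 p q s x (\<alpha> *s x + \<beta> *s y + \<gamma> *s z) z"
    "\<gamma> * det3 p q s x y z = det3 p q s x y (\<alpha> *s x + \<beta> *s y + \<gamma> *s z)"
    by (simp_all add: det3_multilinear)
  then show "\<alpha> = 0 \<and> \<beta> = 0 \<and> \<gamma> = 0" unfolding E using d by simp
qed

lemma indep2_of_minor2_nonzero: "minor2 q s a b \<noteq> 0 \<Longrightarrow> indep2 a b"
  unfolding indep2_def
proof (intro allI impI)
  fix \<alpha> \<beta> assume d: "minor2 q s a b \<noteq> 0" and E: "\<alpha> *s a + \<beta> *s b = 0"
  have e1: "\<alpha> * a$q + \<beta> * b$q = 0" "\<alpha> * a$s + \<beta> * b$s = 0" using E by (auto simp: vec_eq_iff dest: spec)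
  have "\<alpha> * minor2 q s a b = b$s * (\<alpha> * a$q + \<beta> * b$q) - b$q * (\<alpha> * a$s + \<beta> * b$s)"
    "\<beta> * minor2 q s a b = a$q * (\<alpha> * a$s + \<beta> * b$s) - a$s * (\<alpha> * a$q + \<beta> * b$q)"
    by (simp_all add: minor2_def algebra_simps)
  then show "\<alpha> = 0 \<and> \<beta> = 0" unfolding e1 using d by simp
qed

lemma indep2_obtain_minor2:
  assumes "indep2 a b" obtains q s where "minor2 q s a b \<noteq> 0"
proof (rule ccontr)
  assume "\<not> thesis"
  then have Z: "\<And>q s. minor2 q s a b = 0" using that by blast
  from assms have "a \<noteq> 0" by (simp add: indep2_nonzero)
  then obtain q where q: "a$q \<noteq> 0" by (auto simp: vec_eq_iff)
  have "(b$q) *s a + (- a$q) *s b = 0"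
    using Z[of q] q by (auto simp: vec_eq_iff algebra_simps minor2_def)
  then show False using assms[unfolded indep2_def, rule_format, of "b$q" "- a$q"] q by simp
qed

lemma indep3_obtain_det3:
  assumes "indep3 x y z" obtains p q s where "det3 p q s x y z \<noteq> 0"
proof (rule ccontr)
  assume "\<not> thesis"
  then have Z: "\<And>p q s. det3 p q s x y z = 0" using that by blast
  have "x \<noteq> 0"
    using assms[unfolded indep3_def, rule_format, of 1 0 0] by auto
  then obtain p where p: "x$p \<noteq> 0" by (auto simp: vec_eq_iff)
  define y' where "y' = x$p *s y - y$p *s x"
  define z' where "z' = x$p *s z - z$p *s x"
  show False
  proof (cases "y' = 0")
    case True
    then have "(- y$p) *s x + (x$p) *s y + 0 *s z = 0" unfolding y'_def by (simp add: algebra_simps)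
    then show False using assms[unfolded indep3_def, rule_format, of "- y$p" "x$p" 0] p by simp
  next
    case False
    then obtain q where q: "y'$q \<noteq> 0" by (auto simp: vec_eq_iff)
    have "(y'$q *s z' - z'$q *s y') $ r = x$p * det3 p q r x y z" for r
      unfolding y'_def z'_def det3_def minor2_def by (simp add: algebra_simps)
    then have "y'$q *s z' - z'$q *s y' = 0" using Z by (simp add: vec_eq_iff)
    then have "(- y'$q * z$p + z'$q * y$p) *s x + (- z'$q * x$p) *s y + (y'$q * x$p) *s z = 0"
      unfolding y'_def z'_def by (simp add: algebra_simps vec_eq_iff)
    then show False
      using assms[unfolded indep3_def, rule_format, of "- y'$q * z$p + z'$q * y$p" "- z'$q * x$p" "y'$q * x$p"] p q
      by simp
  qed
qed

lemma obtain_det3_complement: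
  assumes ev: "indep2 e v" and C: "indep3 c1 c2 c3"
  obtains d p q s where "d \<in> span3 c1 c2 c3" "det3 p q s e d v \<noteq> 0"
proof -
  obtain d where d: "d \<in> {c1, c2, c3}" "d \<notin> span2 e v"
  proof (rule ccontr)
    assume "\<not> thesis"
    then have "{c1, c2, c3} \<subseteq> span2 e v" using that by blast
    then have "card {c1, c2, c3} \<le> card {e, v}"
      using vec.independent_span_bound[of "{e, v}" "{c1, c2, c3}"] C unfolding indep3_iff_independent by auto
    also have "\<dots> \<le> 2" by (simp add: card_insert_le_m1)
    finally show False using C unfolding indep3_iff_independent by simp
  qed
  have "indep3 e d v"
    unfolding indep3_def
  proof (intro allI impI)
    fix x z t assume H: "x *s e + z *s d + t *s v = 0"
    have z: "z = 0"
    proof (rule ccontr)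
      assume "z \<noteq> 0"
      have "z * d$i = - (x * e$i + t * v$i)" for i
        using arg_cong[OF H, of "\<lambda>y. y$i"] by (simp add: eq_neg_iff_add_eq_0 algebra_simps)
      then have "d = (- x / z) *s e + (- t / z) *s v"
        using \<open>z \<noteq> 0\<close> by (simp add: vec_eq_iff field_simps)
      then show False using d(2) unfolding span2_iff by blast
    qed
    then have "x *s e + t *s v = 0" using H by simp
    then show "x = 0 \<and> z = 0 \<and> t = 0" using ev z unfolding indep2_def by blast
  qed
  then obtain p q s where "det3 p q s e d v \<noteq> 0" by (rule indep3_obtain_det3)
  moreover have "d \<in> span3 c1 c2 c3" using d(1) by (auto intro: vec.span_base)
  ultimately show ?thesis using that by blast
qed

lemma plane_lift_in_span3: "plane_lift p q s c1 c2 c3 x \<in> span3 c1 c2 c3"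
  unfolding plane_lift_def span3_iff by blast

lemma plane_lift_id:
  assumes "det3 p q s c1 c2 c3 \<noteq> 0" "x \<in> span3 c1 c2 c3"
  shows "plane_lift p q s c1 c2 c3 x = x"
proof -
  obtain \<alpha> \<beta> \<gamma> where x: "x = \<alpha> *s c1 + \<beta> *s c2 + \<gamma> *s c3" using assms(2) by (auto simp: span3_iff)
  have "det3 p q s x c2 c3 = \<alpha> * det3 p q s c1 c2 c3" "det3 p q s c1 x c3 = \<beta> * det3 p q s c1 c2 c3"
    "det3 p q s c1 c2 x = \<gamma> * det3 p q s c1 c2 c3"
    by (simp_all add: x det3_multilinear det3_rotate_args[of p q s c2 c3 c1] det3_swap23[of p q s c1 c3 c2])
  with assms(1) show ?thesis unfolding plane_lift_def by (simp add: x)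
qed

lemma plane_lift_cong:
  assumes "rows_agree p q s x y"
  shows "plane_lift p q s c1 c2 c3 x = plane_lift p q s c1 c2 c3 y"
  using det3_rows_agree[OF assms rows_agree_refl rows_agree_refl] det3_rows_agree[OF rows_agree_refl assms rows_agree_refl]
    det3_rows_agree[OF rows_agree_refl rows_agree_refl assms]
  unfolding plane_lift_def by metis

lemma plane_lift_nth:
  assumes "det3 p q s c1 c2 c3 \<noteq> 0" "r = p \<or> r = q \<or> r = s"
  shows "plane_lift p q s c1 c2 c3 x $ r = x $ r"
proof -
  have "p \<noteq> q" "p \<noteq> s" "q \<noteq> s" using det3_nonzero_distinct[OF assms(1)] by auto
  then have "det3 p q s x c2 c3 * c1$r + det3 p q s c1 x c3 * c2$r + det3 p q s c1 c2 x * c3$r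
      = det3 p q s c1 c2 c3 * x$r"
    using assms(2) unfolding det3_def minor2_def by (auto simp: algebra_simps)
  then show ?thesis using assms(1) unfolding plane_lift_def by (simp add: field_simps)
qed

lemma rows_agree_plane_lift:
  "det3 p q s c1 c2 c3 \<noteq> 0 \<Longrightarrow> rows_agree p q s (plane_lift p q s c1 c2 c3 x) x"
  unfolding rows_agree_def using plane_lift_nth by blast

lemma eq_if_rows_agree_in_span3:
  assumes "det3 p q s c1 c2 c3 \<noteq> 0" "x \<in> span3 c1 c2 c3" "y \<in> span3 c1 c2 c3" "rows_agree p q s x y"
  shows "x = y"
  using plane_lift_id[OF assms(1,2)] plane_lift_id[OF assms(1,3)] plane_lift_cong[OF assms(4)] by metis

lemma eq_plane_lift_iff:
  assumes "det3 p q s c1 c2 c3 \<noteq> 0"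
  shows "v = plane_lift p q s c1 c2 c3 x \<longleftrightarrow> v \<in> span3 c1 c2 c3 \<and> rows_agree p q s v x"
  using plane_lift_in_span3 rows_agree_plane_lift[OF assms]
    eq_if_rows_agree_in_span3[OF assms _ plane_lift_in_span3, of v p q s x]
  by (metis rows_agree_sym rows_agree_trans)

lemma det3_zero_rows_combination:
  assumes "det3 p q s x y z = 0" "minor2 q s y z \<noteq> 0"
  defines "\<alpha> \<equiv> minor2 q s x z / minor2 q s y z" and "\<beta> \<equiv> minor2 q s y x / minor2 q s y z"
  shows "rows_agree p q s x (\<alpha> *s y + \<beta> *s z)"
proof -
  define c where "c = minor2 q s y z"
  have c: "c \<noteq> 0" using assms(2) by (simp add: c_def)
  have A: "\<alpha> * c = x$q*z$s - x$s*z$q" using c by (simp add: \<alpha>_def c_def minor2_def)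
  have B: "\<beta> * c = y$q*x$s - y$s*x$q" using c by (simp add: \<beta>_def c_def minor2_def)
  have cc: "c = y$q * z$s - y$s * z$q" by (simp add: c_def minor2_def)
  have "(\<alpha>*y$q + \<beta>*z$q) * c = (\<alpha>*c)*y$q + (\<beta>*c)*z$q" by (simp add: algebra_simps)
  also have "\<dots> = x$q * c" unfolding A B by (simp add: cc algebra_simps)
  finally have q: "x$q = \<alpha>*y$q + \<beta>*z$q" using c by simp
  have "(\<alpha>*y$s + \<beta>*z$s) * c = (\<alpha>*c)*y$s + (\<beta>*c)*z$s" by (simp add: algebra_simps)
  also have "\<dots> = x$s * c" unfolding A B by (simp add: cc algebra_simps)
  finally have s: "x$s = \<alpha>*y$s + \<beta>*z$s" using c by simp
  have "(\<alpha>*y$p + \<beta>*z$p) * c = (\<alpha>*c)*y$p + (\<beta>*c)*z$p" by (simp add: algebra_simps)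
  also have "\<dots> = x$p * c - det3 p q s x y z" unfolding A B by (simp add: cc det3_def minor2_def algebra_simps)
  finally have "x$p = \<alpha>*y$p + \<beta>*z$p" using c assms(1) by simp
  with q s show ?thesis unfolding rows_agree_def by simp
qed

lemma minor2_nonzero_of_indep2:
  assumes C: "det3 p q s c1 c2 c3 \<noteq> 0" and ab: "a \<in> span3 c1 c2 c3" "b \<in> span3 c1 c2 c3" and i: "indep2 a b"
  shows "minor2 q s a b \<noteq> 0 \<or> minor2 s p a b \<noteq> 0 \<or> minor2 p q a b \<noteq> 0"
proof (rule ccontr)
  assume "\<not> ?thesis"
  then have z: "a$q * b$s = a$s * b$q" "a$s * b$p = a$p * b$s" "a$p * b$q = a$q * b$p" by (auto simp: minor2_def)
  have ii: "\<And>\<alpha> \<beta>. \<alpha> *s a + \<beta> *s b = 0 \<Longrightarrow> \<alpha> = 0 \<and> \<beta> = 0" using i unfolding indep2_def by blast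
  show False
  proof (cases "a$p = 0 \<and> a$q = 0 \<and> a$s = 0")
    case True
    then have "a = 0" using eq_if_rows_agree_in_span3[OF C ab(1), of 0] by (simp add: rows_agree_def vec.span_zero)
    then show False using ii[of 1 0] by simp
  next
    case False
    then obtain r0 where r0: "r0 = p \<or> r0 = q \<or> r0 = s" "a$r0 \<noteq> 0" by blast
    define lam where "lam = b$r0 / a$r0"
    have "rows_agree p q s b (lam *s a + 0 *s b)"
      using r0 z unfolding rows_agree_def lam_def by (auto simp: field_simps)
    then have "b = lam *s a + 0 *s b" using eq_if_rows_agree_in_span3[OF C ab(2) span3_lincomb[OF ab]] by blast
    then have "lam *s a + (-1) *s b = 0" by (simp add: vec_eq_iff)
    then show False using ii[of lam "-1"] by simp
  qed
qed

lemma span2_of_det3_zero: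
  assumes C: "det3 p q s c1 c2 c3 \<noteq> 0" and x: "x \<in> span3 c1 c2 c3"
    and ab: "a \<in> span3 c1 c2 c3" "b \<in> span3 c1 c2 c3" "indep2 a b" and z: "det3 p q s x a b = 0"
  shows "x \<in> span2 a b"
proof -
  have "det3 q s p x a b = 0" "det3 s p q x a b = 0"
    using z det3_rotate_rows[of p q s x a b] det3_rotate_rows[of q s p x a b] by simp_all
  then have "\<exists>\<alpha> \<beta>. rows_agree p q s x (\<alpha> *s a + \<beta> *s b)"
    using minor2_nonzero_of_indep2[OF C ab] det3_zero_rows_combination[OF z]
      det3_zero_rows_combination[of q s p x a b] det3_zero_rows_combination[of s p q x a b]
    unfolding rows_agree_def by metis
  then obtain \<alpha> \<beta> where "rows_agree p q s x (\<alpha> *s a + \<beta> *s b)" by blast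
  then have "x = \<alpha> *s a + \<beta> *s b" using eq_if_rows_agree_in_span3[OF C x span3_lincomb[OF ab(1,2)]] by blast
  then show ?thesis by (auto simp: span2_iff)
qed

lemma solve_row_nth_other: "r \<noteq> p \<Longrightarrow> solve_row p q s x y z $ r = x $ r"
  by (simp add: solve_row_def)

lemma det3_solve_row:
  assumes "minor2 q s y z \<noteq> 0" "p \<noteq> q" "p \<noteq> s"
  shows "det3 p q s (solve_row p q s x y z) y z = 0"
  using assms unfolding det3_def solve_row_def by (simp add: field_simps)

lemma solve_row_eq:
  assumes "det3 p q s x y z = 0" "minor2 q s y z \<noteq> 0"
  shows "solve_row p q s x y z = x"
proof -
  have "x$p * minor2 q s y z + (x$q * minor2 s p y z + x$s * minor2 p q y z) = 0"
    using assms(1) unfolding det3_def by (simp add: add.assoc)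
  then have "x$p * minor2 q s y z = - (x$q * minor2 s p y z + x$s * minor2 p q y z)"
    by (simp only: eq_neg_iff_add_eq_0)
  then have "x$p = - (x$q * minor2 s p y z + x$s * minor2 p q y z) / minor2 q s y z"
    using assms(2) by (simp add: eq_divide_eq)
  then show ?thesis by (simp add: solve_row_def vec_eq_iff)
qed

lemma solve_row_rows_agree:
  assumes "rows_agree p q s y y'" "rows_agree p q s z z'" "x$q = x'$q" "x$s = x'$s"
  shows "rows_agree p q s (solve_row p q s x y z) (solve_row p q s x' y' z')"
  using assms unfolding rows_agree_def solve_row_def minor2_def by auto

lemma cyclic3_det3: "cyclic3 p q s p' q' s' \<Longrightarrow> det3 p' q' s' x y z = det3 p q s x y z"
  unfolding cyclic3_def using det3_rotate_rows[of p q s x y z] det3_rotate_rows[of q s p x y z] by auto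

lemma cyclic3_rows_agree: "cyclic3 p q s p' q' s' \<Longrightarrow> rows_agree p' q' s' x y = rows_agree p q s x y"
  unfolding cyclic3_def rows_agree_def by auto

lemma cyclic3_mem: "cyclic3 p q s \<rho> \<sigma> \<sigma>' \<Longrightarrow> p \<noteq> q \<Longrightarrow> p \<noteq> s \<Longrightarrow> q \<noteq> s \<Longrightarrow>
   (\<sigma> = p \<or> \<sigma> = q \<or> \<sigma> = s) \<and> (\<sigma>' = p \<or> \<sigma>' = q \<or> \<sigma>' = s) \<and> (\<rho> = p \<or> \<rho> = q \<or> \<rho> = s) \<and>
   \<sigma> \<noteq> \<rho> \<and> \<sigma>' \<noteq> \<rho> \<and> \<sigma> \<noteq> \<sigma>'"
  unfolding cyclic3_def by auto

lemma obtain_cyclic3_minor2: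
  assumes "det3 p q s c1 c2 c3 \<noteq> 0" "a \<in> span3 c1 c2 c3" "b \<in> span3 c1 c2 c3" "indep2 a b"
  obtains \<rho> \<sigma> \<sigma>' where "cyclic3 p q s \<rho> \<sigma> \<sigma>'" "minor2 \<sigma> \<sigma>' a b \<noteq> 0"
  using minor2_nonzero_of_indep2[OF assms] unfolding cyclic3_def by blast

lemma minor2_cyclic3_rows_agree:
  "cyclic3 p q s \<rho> \<sigma> \<sigma>' \<Longrightarrow> rows_agree p q s y y' \<Longrightarrow> rows_agree p q s z z' \<Longrightarrow> minor2 \<sigma> \<sigma>' y z = minor2 \<sigma> \<sigma>' y' z'"
  using minor2_rows_agree cyclic3_rows_agree by metis

lemma det3_solve_row_cyclic:
  assumes "cyclic3 p q s \<rho> \<sigma> \<sigma>'" "p \<noteq> q" "p \<noteq> s" "q \<noteq> s" "minor2 \<sigma> \<sigma>' y z \<noteq> 0"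
  shows "det3 p q s (solve_row \<rho> \<sigma> \<sigma>' x y z) y z = 0"
proof -
  have "\<rho> \<noteq> \<sigma>" "\<rho> \<noteq> \<sigma>'" using cyclic3_mem[OF assms(1-4)] by auto
  then have "det3 \<rho> \<sigma> \<sigma>' (solve_row \<rho> \<sigma> \<sigma>' x y z) y z = 0" by (rule det3_solve_row[OF assms(5)])
  then show ?thesis using cyclic3_det3[OF assms(1)] by simp
qed

lemma solve_row_recovers:
  assumes "cyclic3 p q s \<rho> \<sigma> \<sigma>'" "rows_agree p q s y y'" "rows_agree p q s z z'"
    "x$\<sigma> = x'$\<sigma>" "x$\<sigma>' = x'$\<sigma>'" "det3 p q s x' y' z' = 0" "minor2 \<sigma> \<sigma>' y' z' \<noteq> 0"
  shows "rows_agree p q s (solve_row \<rho> \<sigma> \<sigma>' x y z) x'"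
proof -
  have "rows_agree \<rho> \<sigma> \<sigma>' (solve_row \<rho> \<sigma> \<sigma>' x y z) (solve_row \<rho> \<sigma> \<sigma>' x' y' z')"
    using solve_row_rows_agree[of \<rho> \<sigma> \<sigma>' y y' z z' x x'] assms(2-5) cyclic3_rows_agree[OF assms(1)] by simp
  moreover have "solve_row \<rho> \<sigma> \<sigma>' x' y' z' = x'"
    using solve_row_eq[of \<rho> \<sigma> \<sigma>' x' y' z'] assms(6,7) cyclic3_det3[OF assms(1)] by simp
  ultimately show ?thesis using cyclic3_rows_agree[OF assms(1)] by simp
qed

lemma cross3_nth:
  assumes "p \<noteq> q" "p \<noteq> s" "q \<noteq> s"
  shows "cross3 p q s y z $ p = minor2 q s y z" "cross3 p q s y z $ q = minor2 s p y z"
    "cross3 p q s y z $ s = minor2 p q y z"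
  using assms by (auto simp: cross3_def)

lemma det3_eq_dot3_cross3:
  "p \<noteq> q \<Longrightarrow> p \<noteq> s \<Longrightarrow> q \<noteq> s \<Longrightarrow> det3 p q s x y z = dot3 p q s x (cross3 p q s y z)"
  by (simp add: det3_def dot3_def cross3_nth)

lemma dot3_rows_agree: "rows_agree p q s x x' \<Longrightarrow> rows_agree p q s y y' \<Longrightarrow> dot3 p q s x y = dot3 p q s x' y'"
  unfolding rows_agree_def dot3_def by simp

lemma cross3_rows_agree:
  "rows_agree p q s y y' \<Longrightarrow> rows_agree p q s z z' \<Longrightarrow> rows_agree p q s (cross3 p q s y z) (cross3 p q s y' z')"
  unfolding rows_agree_def cross3_def minor2_def by auto

lemma dot3_scaled_cross3_left: "p \<noteq> q \<Longrightarrow> p \<noteq> s \<Longrightarrow> q \<noteq> s \<Longrightarrow> dot3 p q s (k *s cross3 p q s N M) N = 0"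
  and dot3_scaled_cross3_right: "p \<noteq> q \<Longrightarrow> p \<noteq> s \<Longrightarrow> q \<noteq> s \<Longrightarrow> dot3 p q s (k *s cross3 p q s N M) M = 0"
  by (simp_all add: dot3_def cross3_nth minor2_def algebra_simps)

lemma minor2_cross3:
  assumes "p \<noteq> q" "p \<noteq> s" "q \<noteq> s"
  shows "minor2 q s x (cross3 p q s a b) = a$p * dot3 p q s x b - b$p * dot3 p q s x a"
    "minor2 s p x (cross3 p q s a b) = a$q * dot3 p q s x b - b$q * dot3 p q s x a"
    "minor2 p q x (cross3 p q s a b) = a$s * dot3 p q s x b - b$s * dot3 p q s x a"
  using assms by (simp_all add: minor2_def cross3_nth dot3_def algebra_simps)

lemma proportional_rows:
  assumes "minor2 q s u w = 0" "minor2 s p u w = 0" "minor2 p q u w = 0"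
    and "r = p \<or> r = q \<or> r = s" "e = p \<or> e = q \<or> e = s"
  shows "w$r * u$e = u$r * w$e"
  using assms unfolding minor2_def by (auto simp: algebra_simps)

lemma cross3_proportional:
  assumes d: "p \<noteq> q" "p \<noteq> s" "q \<noteq> s"
    and "dot3 p q s x a = 0" "dot3 p q s x b = 0"
    and r: "r = p \<or> r = q \<or> r = s" and e: "e = p \<or> e = q \<or> e = s"
  shows "x$r * cross3 p q s a b $ e = x$e * cross3 p q s a b $ r"
proof -
  have "minor2 q s x (cross3 p q s a b) = 0" "minor2 s p x (cross3 p q s a b) = 0"
    "minor2 p q x (cross3 p q s a b) = 0"
    using minor2_cross3[OF d] assms(4,5) by simp_all
  from proportional_rows[OF this r e] show ?thesis by (simp add: algebra_simps)
qed

text \<open>Two distinct lines of the plane meet: the cross product of their normals does not vanish.\<close>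
lemma cross3_cross3_nonzero:
  assumes C: "det3 p q s c1 c2 c3 \<noteq> 0"
    and ab: "a \<in> span3 c1 c2 c3" "b \<in> span3 c1 c2 c3" and ce: "c \<in> span3 c1 c2 c3" "e \<in> span3 c1 c2 c3"
    and i1: "indep2 a b" and i2: "indep2 c e" and ne: "span2 a b \<noteq> span2 c e"
  obtains r where "r = p \<or> r = q \<or> r = s" "cross3 p q s (cross3 p q s a b) (cross3 p q s c e) $ r \<noteq> 0"
proof (rule ccontr)
  note meet = that
  assume nt: "\<not> thesis"
  have d: "p \<noteq> q" "p \<noteq> s" "q \<noteq> s" using det3_nonzero_distinct[OF C] by auto
  define Na where "Na = cross3 p q s a b"
  define Nb where "Nb = cross3 p q s c e"
  have Z: "cross3 p q s Na Nb $ r = 0" if "r = p \<or> r = q \<or> r = s" for r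
    using meet that nt unfolding Na_def Nb_def by blast
  have z: "minor2 q s Na Nb = 0" "minor2 s p Na Nb = 0" "minor2 p q Na Nb = 0"
    using Z[of p] Z[of q] Z[of s] d by (auto simp: cross3_nth)
  have "Na $ p \<noteq> 0 \<or> Na $ q \<noteq> 0 \<or> Na $ s \<noteq> 0"
    using minor2_nonzero_of_indep2[OF C ab i1] unfolding Na_def cross3_nth[OF d] .
  then obtain r0 where r0: "r0 = p \<or> r0 = q \<or> r0 = s" "Na $ r0 \<noteq> 0" by blast
  have "Nb $ p \<noteq> 0 \<or> Nb $ q \<noteq> 0 \<or> Nb $ s \<noteq> 0"
    using minor2_nonzero_of_indep2[OF C ce i2] unfolding Nb_def cross3_nth[OF d] .
  then obtain r1 where r1: "r1 = p \<or> r1 = q \<or> r1 = s" "Nb $ r1 \<noteq> 0" by blast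
  define \<mu> where "\<mu> = Nb $ r0 / Na $ r0"
  have propN: "Nb $ r = \<mu> * Na $ r" if "r = p \<or> r = q \<or> r = s" for r
    using proportional_rows[OF z that r0(1)] r0(2) unfolding \<mu>_def by (simp add: field_simps)
  have "\<mu> \<noteq> 0" using propN[OF r1(1)] r1(2) by auto
  have in_ab: "x \<in> span2 a b" if "x \<in> span3 c1 c2 c3" "dot3 p q s x Nb = 0" for x
  proof -
    have "dot3 p q s x Nb = \<mu> * dot3 p q s x Na"
      using propN unfolding dot3_def by (simp add: algebra_simps)
    then have "det3 p q s x a b = 0" using that \<open>\<mu> \<noteq> 0\<close> det3_eq_dot3_cross3[OF d] unfolding Na_def by simp
    then show ?thesis using span2_of_det3_zero[OF C that(1) ab i1] by simp
  qed
  have "c \<in> span2 a b" "e \<in> span2 a b"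
    using in_ab[OF ce(1)] in_ab[OF ce(2)] det3_eq_dot3_cross3[OF d, of c c e] det3_eq_dot3_cross3[OF d, of e c e]
    unfolding Nb_def by simp_all
  moreover from this have "a \<in> span2 c e" "b \<in> span2 c e" using span2_basis_exchange i2 by blast+
  ultimately have "span2 c e \<subseteq> span2 a b" "span2 a b \<subseteq> span2 c e"
    using span_subset_subspace_iff[of "span2 a b" "{c, e}"] span_subset_subspace_iff[of "span2 c e" "{a, b}"]
    by simp_all
  with ne show False by blast
qed

text \<open>A point on two lines is recovered (on the rows) from one of its rows and the intersection
  direction \<open>g\<close> of the lines.\<close>
lemma rows_agree_scaled_meet:
  assumes d: "p \<noteq> q" "p \<noteq> s" "q \<noteq> s"
    and g: "rows_agree p q s g (cross3 p q s (cross3 p q s a b) (cross3 p q s c d))" "g $ e \<noteq> 0"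
    and e: "e = p \<or> e = q \<or> e = s" and x: "x \<in> span2 a b" "x \<in> span2 c d"
  shows "rows_agree p q s ((x$e / g$e) *s g) x"
proof -
  have "dot3 p q s x (cross3 p q s a b) = 0" "dot3 p q s x (cross3 p q s c d) = 0"
    using det3_span2_zero[OF x(1), of p q s] det3_span2_zero[OF x(2), of p q s] by (simp_all add: det3_eq_dot3_cross3[OF d])
  then have "x$r * g $ e = x$e * g $ r" if "r = p \<or> r = q \<or> r = s" for r
    using cross3_proportional[OF d _ _ that e] g(1) that e unfolding rows_agree_def by auto
  then show ?thesis using g(2) unfolding rows_agree_def by (auto simp: field_simps)
qed

lemma holo_on_minor2: "holo_vec_on W y \<Longrightarrow> holo_vec_on W z \<Longrightarrow> holo_on W (\<lambda>t. minor2 q s (y t) (z t))"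
  unfolding holo_vec_on_def minor2_def by (intro holo_on_diff holo_on_mult) auto

lemma holo_on_det3:
  "holo_vec_on W x \<Longrightarrow> holo_vec_on W y \<Longrightarrow> holo_vec_on W z \<Longrightarrow> holo_on W (\<lambda>t. det3 p q s (x t) (y t) (z t))"
  unfolding det3_def by (intro holo_on_add holo_on_mult holo_on_minor2) (auto simp: holo_vec_on_def)

lemma holo_vec_on_plane_lift:
  assumes "holo_vec_on W c1" "holo_vec_on W c2" "holo_vec_on W c3" "holo_vec_on W x"
    and "\<And>t. t \<in> W \<Longrightarrow> det3 p q s (c1 t) (c2 t) (c3 t) \<noteq> 0"
  shows "holo_vec_on W (\<lambda>t. plane_lift p q s (c1 t) (c2 t) (c3 t) (x t))"
  using assms unfolding holo_vec_on_def plane_lift_def vector_add_component vector_smult_component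
  by (intro allI holo_on_add holo_on_mult holo_on_divide holo_on_det3) (auto simp: holo_vec_on_def)

lemma holo_vec_on_solve_row:
  assumes "holo_vec_on W x" "holo_vec_on W y" "holo_vec_on W z" "\<And>t. t \<in> W \<Longrightarrow> minor2 q s (y t) (z t) \<noteq> 0"
  shows "holo_vec_on W (\<lambda>t. solve_row p q s (x t) (y t) (z t))"
  using assms unfolding holo_vec_on_def solve_row_def vec_lambda_beta
  by (intro allI holo_on_if holo_on_divide holo_on_uminus holo_on_add holo_on_mult holo_on_minor2)
    (auto simp: holo_vec_on_def)

lemma holo_vec_on_cross3: "holo_vec_on W y \<Longrightarrow> holo_vec_on W z \<Longrightarrow> holo_vec_on W (\<lambda>t. cross3 p q s (y t) (z t))"
  unfolding cross3_def holo_vec_on_def vec_lambda_beta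
  by (intro allI holo_on_if holo_on_minor2[unfolded holo_vec_on_def]) auto

section \<open>The frame preimage of the triangle space\<close>

definition frame_preimage :: "'n::finite frame set" where
  "frame_preimage = {z \<in> frame_dom. frame_proj z \<in> triangle_space}"

text \<open>Incidence conditions for a frame whose slots \<open>V\<^sub>i\<close> carry the vertices and \<open>(A\<^sub>i, B\<^sub>i)\<close> the bases
  of the sides (the plane is always in the slots \<open>9, 10, 11\<close>). Relabelling the slots lets one chart
  construction serve all symmetric configurations.\<close>
definition incident :: "12 \<Rightarrow> 12 \<Rightarrow> 12 \<Rightarrow> 12 \<Rightarrow> 12 \<Rightarrow> 12 \<Rightarrow> 12 \<Rightarrow> 12 \<Rightarrow> 12 \<Rightarrow> 'n::finite frame \<Rightarrow> bool" where
  "incident V1 V2 V3 A1 B1 A2 B2 A3 B3 z \<longleftrightarrow>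
     z$V1 \<noteq> 0 \<and> z$V2 \<noteq> 0 \<and> z$V3 \<noteq> 0 \<and> indep2 (z$A1) (z$B1) \<and> indep2 (z$A2) (z$B2) \<and> indep2 (z$A3) (z$B3) \<and>
     indep3 (z$9) (z$10) (z$11) \<and>
     z$V2 \<in> span2 (z$A1) (z$B1) \<and> z$V3 \<in> span2 (z$A1) (z$B1) \<and>
     z$V1 \<in> span2 (z$A2) (z$B2) \<and> z$V3 \<in> span2 (z$A2) (z$B2) \<and>
     z$V1 \<in> span2 (z$A3) (z$B3) \<and> z$V2 \<in> span2 (z$A3) (z$B3) \<and>
     z$A1 \<in> span3 (z$9) (z$10) (z$11) \<and> z$B1 \<in> span3 (z$9) (z$10) (z$11) \<and>
     z$A2 \<in> span3 (z$9) (z$10) (z$11) \<and> z$B2 \<in> span3 (z$9) (z$10) (z$11) \<and>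
     z$A3 \<in> span3 (z$9) (z$10) (z$11) \<and> z$B3 \<in> span3 (z$9) (z$10) (z$11)"

lemma frame_dom_iff:
  "z \<in> frame_dom \<longleftrightarrow> z$0 \<noteq> 0 \<and> z$1 \<noteq> 0 \<and> z$2 \<noteq> 0 \<and> indep2 (z$3) (z$4) \<and> indep2 (z$5) (z$6) \<and>
     indep2 (z$7) (z$8) \<and> indep3 (z$9) (z$10) (z$11)"
  unfolding frame_dom_def indep2_iff_independent indep3_iff_independent by auto

lemma frame_preimage_iff_incident: "z \<in> frame_preimage \<longleftrightarrow> incident 0 1 2 3 4 5 6 7 8 z"
proof -
  have "vec.subspace (span2 a b)" "vec.subspace (span3 a b c)" for a b c :: "complex^'n" by simp_all
  then show ?thesis
    unfolding frame_preimage_def incident_def frame_dom_iff frame_proj_def triangle_space_def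
    using Grass_1_span by (auto simp: span_subset_subspace_iff Grass_2_span Grass_3_span)
qed

lemma incident_rotate: "incident V1 V2 V3 A1 B1 A2 B2 A3 B3 z = incident V2 V3 V1 A2 B2 A3 B3 A1 B1 z"
  unfolding incident_def by auto

lemma incident_swap1: "incident V1 V2 V3 A1 B1 A2 B2 A3 B3 z = incident V1 V2 V3 B1 A1 A2 B2 A3 B3 z"
  and incident_swap2: "incident V1 V2 V3 A1 B1 A2 B2 A3 B3 z = incident V1 V2 V3 A1 B1 B2 A2 A3 B3 z"
  unfolding incident_def by (auto simp: insert_commute intro: indep2_commute)

lemma incident_in_plane:
  "incident V1 V2 V3 A1 B1 A2 B2 A3 B3 z \<Longrightarrow> m \<in> {V1, V2, V3, A1, B1, A2, B2, A3, B3} \<Longrightarrow>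
     z$m \<in> span3 (z$9) (z$10) (z$11)"
  unfolding incident_def by (auto intro: span2_subset_span3)

lemma span2_of_det3_zero_frame:
  assumes det: "det3 p q s (z$9) (z$10) (z$11) \<noteq> 0"
    and plane: "\<And>m. m \<notin> {9, 10, 11} \<Longrightarrow> z$m \<in> span3 (z$9) (z$10) (z$11)"
    and "det3 p q s (z$m) (z$a) (z$b) = 0" "indep2 (z$a) (z$b)"
  shows "z$m \<in> span2 (z$a) (z$b)"
proof -
  have "z$k \<in> span3 (z$9) (z$10) (z$11)" for k
    using plane[of k] by (cases "k \<in> {9, 10, 11}") (auto intro: vec.span_base)
  then show ?thesis using span2_of_det3_zero[OF det _ _ _ assms(4,3)] by blast
qed

section \<open>Charts at non-degenerate triangles\<close>

text \<open>The rows outside \<open>p, q, s\<close> of a vector in the plane are recovered from its rows \<open>p, q, s\<close> by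
  Cramer's rule, so \<open>S\<close> is locally a graph over the coordinates outside \<open>D\<close>.\<close>
lemma complex_submanifold_at_plane_chart:
  fixes F :: "'n::finite frame \<Rightarrow> 'n frame" and S :: "'n frame set"
  assumes W: "open W" "\<And>t. t \<in> W \<Longrightarrow> det3 p q s (t$9) (t$10) (t$11) \<noteq> 0"
    and holo: "\<And>m. holo_vec_on W (\<lambda>t. F t $ m)"
    and free: "\<And>t m r. t \<in> W \<Longrightarrow> (m, r) \<notin> D \<Longrightarrow> r \<in> {p, q, s} \<Longrightarrow> F t $ m $ r = t $ m $ r"
    and D: "\<And>m r. (m, r) \<in> D \<Longrightarrow> m \<notin> {9, 10, 11}" "\<And>m r. m \<notin> {9, 10, 11} \<Longrightarrow> r \<notin> {p, q, s} \<Longrightarrow> (m, r) \<in> D"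
    and U: "open U" "y \<in> U" "\<And>z. z \<in> U \<Longrightarrow> drop_coords D z \<in> W"
    and S: "\<And>z. z \<in> U \<Longrightarrow> z \<in> S \<longleftrightarrow> (\<forall>m. m \<notin> {9, 10, 11} \<longrightarrow>
      z$m \<in> span3 (z$9) (z$10) (z$11) \<and> rows_agree p q s (z$m) (F (drop_coords D z) $ m))"
    and y: "y \<in> S"
  shows "complex_submanifold_at S y"
proof -
  define R where "R t = (\<chi> m. if m \<in> {9, 10, 11} then t$m else plane_lift p q s (t$9) (t$10) (t$11) (F t $ m))"
    for t :: "'n frame"
  have drop_plane: "drop_coords D z $ m = z $ m" if "m \<in> {9, 10, 11}" for z m
    using D(1) that by (auto simp: vec_eq_iff)
  show ?thesis
  proof (rule complex_submanifold_at_coordinate_graph[OF W(1) _ _ U _ y])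
    show "holo_on W (\<lambda>t. R t $ m $ r)" for m r
    proof -
      have "holo_vec_on W (\<lambda>t. R t $ m)"
        unfolding R_def vec_lambda_beta using W(2) by (intro holo_vec_on_if holo_vec_on_plane_lift holo) auto
      then show ?thesis unfolding holo_vec_on_def by blast
    qed
    show "R t $ m $ r = t $ m $ r" if "t \<in> W" "(m, r) \<notin> D" for t m r
    proof (cases "m \<in> {9, 10, 11}")
      case False
      then have "r \<in> {p, q, s}" using D(2) that(2) by blast
      then show ?thesis using False plane_lift_nth[OF W(2)[OF that(1)]] free[OF that] by (simp add: R_def)
    qed (simp add: R_def)
    show "z \<in> S \<longleftrightarrow> z = R (drop_coords D z)" if "z \<in> U" for z
    proof -
      have det: "det3 p q s (z$9) (z$10) (z$11) \<noteq> 0" using W(2)[OF U(3)[OF that]] drop_plane by simp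
      have "z = R (drop_coords D z) \<longleftrightarrow> (\<forall>m. z $ m = R (drop_coords D z) $ m)"
        by (rule vec_eq_iff)
      also have "\<dots> \<longleftrightarrow> (\<forall>m. m \<notin> {9, 10, 11} \<longrightarrow>
          z$m \<in> span3 (z$9) (z$10) (z$11) \<and> rows_agree p q s (z$m) (F (drop_coords D z) $ m))"
        by (auto simp: R_def drop_plane eq_plane_lift_iff[OF det])
      finally have "z = R (drop_coords D z) \<longleftrightarrow> (\<forall>m. m \<notin> {9, 10, 11} \<longrightarrow>
          z$m \<in> span3 (z$9) (z$10) (z$11) \<and> rows_agree p q s (z$m) (F (drop_coords D z) $ m))" .
      with S[OF that] show ?thesis by simp
    qed
  qed
qed

locale plane_chart =
  fixes V1 V2 V3 A1 B1 A2 B2 A3 B3 :: 12 and y :: "'n::finite frame" and p q s :: 'n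
  assumes labels: "distinct [V1, V2, V3, A1, B1, A2, B2, A3, B3, 9, 10, 11]"
    and incident_y: "incident V1 V2 V3 A1 B1 A2 B2 A3 B3 y"
    and det3_y: "det3 p q s (y$9) (y$10) (y$11) \<noteq> 0"
begin

lemma rows_distinct: "p \<noteq> q" "p \<noteq> s" "q \<noteq> s"
  using det3_nonzero_distinct[OF det3_y] by auto

lemma label_neqs:
  "V1 \<noteq> V2" "V1 \<noteq> V3" "V1 \<noteq> A1" "V1 \<noteq> B1" "V1 \<noteq> A2" "V1 \<noteq> B2" "V1 \<noteq> A3" "V1 \<noteq> B3"
  "V2 \<noteq> V3" "V2 \<noteq> A1" "V2 \<noteq> B1" "V2 \<noteq> A2" "V2 \<noteq> B2" "V2 \<noteq> A3" "V2 \<noteq> B3"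
  "V3 \<noteq> A1" "V3 \<noteq> B1" "V3 \<noteq> A2" "V3 \<noteq> B2" "V3 \<noteq> A3" "V3 \<noteq> B3"
  "A1 \<noteq> B1" "A1 \<noteq> A2" "A1 \<noteq> B2" "A1 \<noteq> A3" "A1 \<noteq> B3"
  "B1 \<noteq> A2" "B1 \<noteq> B2" "B1 \<noteq> A3" "B1 \<noteq> B3"
  "A2 \<noteq> B2" "A2 \<noteq> A3" "A2 \<noteq> B3" "B2 \<noteq> A3" "B2 \<noteq> B3" "A3 \<noteq> B3"
  using labels by auto

lemma labels_not_plane: "V1 \<notin> {9, 10, 11}" "V2 \<notin> {9, 10, 11}" "V3 \<notin> {9, 10, 11}"
  "A1 \<notin> {9, 10, 11}" "B1 \<notin> {9, 10, 11}" "A2 \<notin> {9, 10, 11}" "B2 \<notin> {9, 10, 11}"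
  "A3 \<notin> {9, 10, 11}" "B3 \<notin> {9, 10, 11}"
  using labels by auto

lemma vector_label_iff: "m \<notin> {9, 10, 11} \<longleftrightarrow> m \<in> {V1, V2, V3, A1, B1, A2, B2, A3, B3}"
proof -
  have "set [V1, V2, V3, A1, B1, A2, B2, A3, B3, 9, 10, 11] = UNIV"
    using labels by (intro card_subset_eq) (auto simp: distinct_card)
  then show ?thesis using labels by auto
qed

end

text \<open>Chart at a triangle whose vertex \<open>V3\<close> differs from \<open>V1\<close> and \<open>V2\<close>. Free data: the plane, \<open>V3\<close>,
  the side \<open>A3 B3\<close>, and all rows but one of the other vectors: \<open>V1, V2\<close> are put on \<open>A3 B3\<close> by solving
  for the row \<open>\<rho>3\<close>, then \<open>A1, B1\<close> on the line \<open>V2 V3\<close> (row \<open>\<rho>1\<close>) and \<open>A2, B2\<close> on \<open>V1 V3\<close> (row \<open>\<rho>2\<close>).\<close>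
locale vertex_chart = plane_chart +
  fixes \<rho>1 \<sigma>1 \<sigma>1' \<rho>2 \<sigma>2 \<sigma>2' \<rho>3 \<sigma>3 \<sigma>3' k1 l1 k2 l2 :: "'n::finite"
  assumes cyclic: "cyclic3 p q s \<rho>1 \<sigma>1 \<sigma>1'" "cyclic3 p q s \<rho>2 \<sigma>2 \<sigma>2'" "cyclic3 p q s \<rho>3 \<sigma>3 \<sigma>3'"
    and minors_y: "minor2 \<sigma>3 \<sigma>3' (y$A3) (y$B3) \<noteq> 0" "minor2 \<sigma>1 \<sigma>1' (y$V2) (y$V3) \<noteq> 0"
      "minor2 \<sigma>2 \<sigma>2' (y$V1) (y$V3) \<noteq> 0" "minor2 k1 l1 (y$A1) (y$B1) \<noteq> 0" "minor2 k2 l2 (y$A2) (y$B2) \<noteq> 0"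
begin

definition v1 :: "'n frame \<Rightarrow> complex^'n" where
  "v1 t = solve_row \<rho>3 \<sigma>3 \<sigma>3' (t$V1) (t$A3) (t$B3)"

definition v2 :: "'n frame \<Rightarrow> complex^'n" where
  "v2 t = solve_row \<rho>3 \<sigma>3 \<sigma>3' (t$V2) (t$A3) (t$B3)"

definition row_data :: "'n frame \<Rightarrow> 'n frame" where
  "row_data t = (\<chi> m. if m = V1 then v1 t else if m = V2 then v2 t
     else if m = A1 \<or> m = B1 then solve_row \<rho>1 \<sigma>1 \<sigma>1' (t$m) (v2 t) (t$V3)
     else if m = A2 \<or> m = B2 then solve_row \<rho>2 \<sigma>2 \<sigma>2' (t$m) (v1 t) (t$V3) else t$m)"

definition dependent :: "(12 \<times> 'n) set" where
  "dependent = {(m, r). m \<notin> {9, 10, 11} \<and> (r \<notin> {p, q, s} \<or> ((m = V1 \<or> m = V2) \<and> r = \<rho>3)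
     \<or> ((m = A1 \<or> m = B1) \<and> r = \<rho>1) \<or> ((m = A2 \<or> m = B2) \<and> r = \<rho>2))}"

definition base_domain :: "'n frame set" where
  "base_domain = {t. det3 p q s (t$9) (t$10) (t$11) \<noteq> 0 \<and> minor2 \<sigma>3 \<sigma>3' (t$A3) (t$B3) \<noteq> 0}"

definition domain :: "'n frame set" where
  "domain = {t \<in> base_domain. minor2 \<sigma>1 \<sigma>1' (v2 t) (t$V3) \<noteq> 0 \<and> minor2 \<sigma>2 \<sigma>2' (v1 t) (t$V3) \<noteq> 0}"

definition nbhd :: "'n frame set" where
  "nbhd = {z. drop_coords dependent z \<in> domain \<and> minor2 k1 l1 (z$A1) (z$B1) \<noteq> 0
     \<and> minor2 k2 l2 (z$A2) (z$B2) \<noteq> 0}"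

lemma cyclic_mem:
  "\<sigma>3 \<in> {p, q, s}" "\<sigma>3' \<in> {p, q, s}" "\<sigma>3 \<noteq> \<rho>3" "\<sigma>3' \<noteq> \<rho>3"
  "\<sigma>1 \<in> {p, q, s}" "\<sigma>1' \<in> {p, q, s}" "\<sigma>1 \<noteq> \<rho>1" "\<sigma>1' \<noteq> \<rho>1"
  "\<sigma>2 \<in> {p, q, s}" "\<sigma>2' \<in> {p, q, s}" "\<sigma>2 \<noteq> \<rho>2" "\<sigma>2' \<noteq> \<rho>2"
  using cyclic3_mem[OF cyclic(3) rows_distinct] cyclic3_mem[OF cyclic(1) rows_distinct]
    cyclic3_mem[OF cyclic(2) rows_distinct] by auto

lemma drop_plane: "m \<in> {9, 10, 11} \<Longrightarrow> drop_coords dependent z $ m = z $ m"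
  by (auto simp: vec_eq_iff dependent_def)

lemma drop_rows_agree:
  assumes "m \<in> {V3, A3, B3}"
  shows "rows_agree p q s (drop_coords dependent z $ m) (z $ m)"
proof -
  have "m \<noteq> V1" "m \<noteq> V2" "m \<noteq> A1" "m \<noteq> B1" "m \<noteq> A2" "m \<noteq> B2"
    using assms label_neqs by auto
  then show ?thesis by (simp add: rows_agree_def dependent_def)
qed

lemma drop_nth_solved:
  assumes "r \<in> {p, q, s}"
  shows "m \<in> {V1, V2} \<Longrightarrow> r \<noteq> \<rho>3 \<Longrightarrow> drop_coords dependent z $ m $ r = z $ m $ r"
    and "m \<in> {A1, B1} \<Longrightarrow> r \<noteq> \<rho>1 \<Longrightarrow> drop_coords dependent z $ m $ r = z $ m $ r"
    and "m \<in> {A2, B2} \<Longrightarrow> r \<noteq> \<rho>2 \<Longrightarrow> drop_coords dependent z $ m $ r = z $ m $ r"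
proof -
  have neqs: "m \<in> {V1, V2} \<Longrightarrow> m \<notin> {9, 10, 11} \<and> m \<notin> {A1, B1, A2, B2}"
    "m \<in> {A1, B1} \<Longrightarrow> m \<notin> {9, 10, 11} \<and> m \<notin> {V1, V2, A2, B2}"
    "m \<in> {A2, B2} \<Longrightarrow> m \<notin> {9, 10, 11} \<and> m \<notin> {V1, V2, A1, B1}"
    using labels_not_plane label_neqs by auto
  show "m \<in> {V1, V2} \<Longrightarrow> r \<noteq> \<rho>3 \<Longrightarrow> drop_coords dependent z $ m $ r = z $ m $ r"
    "m \<in> {A1, B1} \<Longrightarrow> r \<noteq> \<rho>1 \<Longrightarrow> drop_coords dependent z $ m $ r = z $ m $ r"
    "m \<in> {A2, B2} \<Longrightarrow> r \<noteq> \<rho>2 \<Longrightarrow> drop_coords dependent z $ m $ r = z $ m $ r"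
    using assms neqs unfolding dependent_def by auto
qed

lemma drop_nth:
  "drop_coords dependent z $ V1 $ \<sigma>3 = z $ V1 $ \<sigma>3" "drop_coords dependent z $ V1 $ \<sigma>3' = z $ V1 $ \<sigma>3'"
  "drop_coords dependent z $ V2 $ \<sigma>3 = z $ V2 $ \<sigma>3" "drop_coords dependent z $ V2 $ \<sigma>3' = z $ V2 $ \<sigma>3'"
  "drop_coords dependent z $ A1 $ \<sigma>1 = z $ A1 $ \<sigma>1" "drop_coords dependent z $ A1 $ \<sigma>1' = z $ A1 $ \<sigma>1'"
  "drop_coords dependent z $ B1 $ \<sigma>1 = z $ B1 $ \<sigma>1" "drop_coords dependent z $ B1 $ \<sigma>1' = z $ B1 $ \<sigma>1'"
  "drop_coords dependent z $ A2 $ \<sigma>2 = z $ A2 $ \<sigma>2" "drop_coords dependent z $ A2 $ \<sigma>2' = z $ A2 $ \<sigma>2'"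
  "drop_coords dependent z $ B2 $ \<sigma>2 = z $ B2 $ \<sigma>2" "drop_coords dependent z $ B2 $ \<sigma>2' = z $ B2 $ \<sigma>2'"
  using drop_nth_solved cyclic_mem by simp_all

lemma vertices_recovered:
  assumes "incident V1 V2 V3 A1 B1 A2 B2 A3 B3 z" "drop_coords dependent z \<in> base_domain"
  shows "rows_agree p q s (v1 (drop_coords dependent z)) (z$V1)"
    "rows_agree p q s (v2 (drop_coords dependent z)) (z$V2)"
proof -
  note agree = drop_rows_agree[of A3 z] drop_rows_agree[of B3 z]
  have "minor2 \<sigma>3 \<sigma>3' (z$A3) (z$B3) \<noteq> 0"
    using assms(2) minor2_cyclic3_rows_agree[OF cyclic(3) agree] unfolding base_domain_def by simp
  moreover have "det3 p q s (z$V1) (z$A3) (z$B3) = 0" "det3 p q s (z$V2) (z$A3) (z$B3) = 0"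
    using assms(1) unfolding incident_def by (simp_all add: det3_span2_zero)
  ultimately show "rows_agree p q s (v1 (drop_coords dependent z)) (z$V1)"
    "rows_agree p q s (v2 (drop_coords dependent z)) (z$V2)"
    unfolding v1_def v2_def
    using solve_row_recovers[OF cyclic(3) agree drop_nth(1,2)] solve_row_recovers[OF cyclic(3) agree drop_nth(3,4)]
    by simp_all
qed

lemma row_data_recovers:
  assumes "incident V1 V2 V3 A1 B1 A2 B2 A3 B3 z" "drop_coords dependent z \<in> domain" "m \<notin> {9, 10, 11}"
  shows "rows_agree p q s (row_data (drop_coords dependent z) $ m) (z$m)"
proof -
  let ?t = "drop_coords dependent z"
  have base: "?t \<in> base_domain" using assms(2) by (simp add: domain_def)
  note V = vertices_recovered[OF assms(1) base]
  note V3 = drop_rows_agree[of V3 z]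
  have "minor2 \<sigma>1 \<sigma>1' (z$V2) (z$V3) \<noteq> 0" "minor2 \<sigma>2 \<sigma>2' (z$V1) (z$V3) \<noteq> 0"
    using assms(2) minor2_cyclic3_rows_agree[OF cyclic(1) V(2) V3]
      minor2_cyclic3_rows_agree[OF cyclic(2) V(1) V3] by (auto simp: domain_def)
  moreover from this have "z$A1 \<in> span2 (z$V2) (z$V3)" "z$B1 \<in> span2 (z$V2) (z$V3)"
    "z$A2 \<in> span2 (z$V1) (z$V3)" "z$B2 \<in> span2 (z$V1) (z$V3)"
    using span2_basis_exchange[of "z$V2" "z$A1" "z$B1" "z$V3"] span2_basis_exchange[of "z$V1" "z$A2" "z$B2" "z$V3"]
      indep2_of_minor2_nonzero assms(1) unfolding incident_def by blast+
  ultimately have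
    "rows_agree p q s (solve_row \<rho>1 \<sigma>1 \<sigma>1' (?t$A1) (v2 ?t) (?t$V3)) (z$A1)"
    "rows_agree p q s (solve_row \<rho>1 \<sigma>1 \<sigma>1' (?t$B1) (v2 ?t) (?t$V3)) (z$B1)"
    "rows_agree p q s (solve_row \<rho>2 \<sigma>2 \<sigma>2' (?t$A2) (v1 ?t) (?t$V3)) (z$A2)"
    "rows_agree p q s (solve_row \<rho>2 \<sigma>2 \<sigma>2' (?t$B2) (v1 ?t) (?t$V3)) (z$B2)"
    using solve_row_recovers[OF cyclic(1) V(2) V3 drop_nth(5,6)] solve_row_recovers[OF cyclic(1) V(2) V3 drop_nth(7,8)]
      solve_row_recovers[OF cyclic(2) V(1) V3 drop_nth(9,10)] solve_row_recovers[OF cyclic(2) V(1) V3 drop_nth(11,12)]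
    by (simp_all add: det3_span2_zero)
  moreover have "m \<in> {V1, V2, V3, A1, B1, A2, B2, A3, B3}" using assms(3) vector_label_iff by blast
  ultimately show ?thesis
    using V drop_rows_agree[of m z] label_neqs by (auto simp: row_data_def)
qed

lemma open_base_domain: "open base_domain"
proof -
  have "open {t :: 'n frame \<in> UNIV. det3 p q s (t$9) (t$10) (t$11) \<noteq> 0}"
    by (rule open_holo_nonzero) (auto intro!: holo_on_det3)
  then have "open {t \<in> {t :: 'n frame \<in> UNIV. det3 p q s (t$9) (t$10) (t$11) \<noteq> 0}. minor2 \<sigma>3 \<sigma>3' (t$A3) (t$B3) \<noteq> 0}"
    by (rule open_holo_nonzero) (auto intro!: holo_on_minor2)
  then show ?thesis unfolding base_domain_def by simp
qed

lemma holo_vertices: "holo_vec_on base_domain v1" "holo_vec_on base_domain v2"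
  unfolding v1_def v2_def by (auto intro!: holo_vec_on_solve_row simp: base_domain_def)

lemma domain_subset: "domain \<subseteq> base_domain"
  by (auto simp: domain_def)

lemma open_domain: "open domain"
proof -
  have "open {t \<in> base_domain. minor2 \<sigma>1 \<sigma>1' (v2 t) (t$V3) \<noteq> 0}"
    by (rule open_holo_nonzero[OF open_base_domain]) (auto intro!: holo_on_minor2 holo_vertices)
  then have "open {t \<in> {t \<in> base_domain. minor2 \<sigma>1 \<sigma>1' (v2 t) (t$V3) \<noteq> 0}. minor2 \<sigma>2 \<sigma>2' (v1 t) (t$V3) \<noteq> 0}"
    by (rule open_holo_nonzero)
      (auto intro!: holo_on_minor2 holo_vec_on_subset[OF holo_vertices(1)] simp: domain_subset)
  then show ?thesis unfolding domain_def by (simp add: conj_assoc)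
qed

lemma holo_row_data: "holo_vec_on domain (\<lambda>t. row_data t $ m)"
  using holo_vec_on_subset[OF holo_vertices(1) domain_subset] holo_vec_on_subset[OF holo_vertices(2) domain_subset]
  unfolding row_data_def vec_lambda_beta
  by (intro holo_vec_on_if holo_vec_on_solve_row) (auto simp: domain_def)

lemma row_data_free:
  assumes "(m, r) \<notin> dependent" "r \<in> {p, q, s}"
  shows "row_data t $ m $ r = t $ m $ r"
proof -
  have "m \<notin> {9, 10, 11} \<Longrightarrow> m \<in> {V1, V2} \<Longrightarrow> r \<noteq> \<rho>3" "m \<notin> {9, 10, 11} \<Longrightarrow> m \<in> {A1, B1} \<Longrightarrow> r \<noteq> \<rho>1"
    "m \<notin> {9, 10, 11} \<Longrightarrow> m \<in> {A2, B2} \<Longrightarrow> r \<noteq> \<rho>2"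
    using assms unfolding dependent_def by auto
  then show ?thesis
    using labels_not_plane by (auto simp: row_data_def v1_def v2_def solve_row_nth_other)
qed

lemma row_data_constraints:
  assumes t: "drop_coords dependent z \<in> domain"
    and agree: "\<And>m. m \<notin> {9, 10, 11} \<Longrightarrow> rows_agree p q s (z$m) (row_data (drop_coords dependent z) $ m)"
  shows "det3 p q s (z$V1) (z$A3) (z$B3) = 0" "det3 p q s (z$V2) (z$A3) (z$B3) = 0"
    "det3 p q s (z$A1) (z$V2) (z$V3) = 0" "det3 p q s (z$B1) (z$V2) (z$V3) = 0"
    "det3 p q s (z$A2) (z$V1) (z$V3) = 0" "det3 p q s (z$B2) (z$V1) (z$V3) = 0"
    "indep2 (z$A3) (z$B3)" "indep2 (z$V2) (z$V3)" "indep2 (z$V1) (z$V3)"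
proof -
  let ?t = "drop_coords dependent z"
  note agree' = agree[OF labels_not_plane(1)] agree[OF labels_not_plane(2)] agree[OF labels_not_plane(3)]
    agree[OF labels_not_plane(4)] agree[OF labels_not_plane(5)] agree[OF labels_not_plane(6)]
    agree[OF labels_not_plane(7)] agree[OF labels_not_plane(8)] agree[OF labels_not_plane(9)]
  have aV: "rows_agree p q s (z$V1) (v1 ?t)" "rows_agree p q s (z$V2) (v2 ?t)" "rows_agree p q s (z$V3) (?t$V3)"
    "rows_agree p q s (z$A3) (?t$A3)" "rows_agree p q s (z$B3) (?t$B3)"
    using agree' label_neqs by (simp_all add: row_data_def)
  have aA: "rows_agree p q s (z$A1) (solve_row \<rho>1 \<sigma>1 \<sigma>1' (?t$A1) (v2 ?t) (?t$V3))"
    "rows_agree p q s (z$B1) (solve_row \<rho>1 \<sigma>1 \<sigma>1' (?t$B1) (v2 ?t) (?t$V3))"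
    "rows_agree p q s (z$A2) (solve_row \<rho>2 \<sigma>2 \<sigma>2' (?t$A2) (v1 ?t) (?t$V3))"
    "rows_agree p q s (z$B2) (solve_row \<rho>2 \<sigma>2 \<sigma>2' (?t$B2) (v1 ?t) (?t$V3))"
    using agree' label_neqs by (simp_all add: row_data_def)
  have k: "minor2 \<sigma>3 \<sigma>3' (?t$A3) (?t$B3) \<noteq> 0" "minor2 \<sigma>1 \<sigma>1' (v2 ?t) (?t$V3) \<noteq> 0"
    "minor2 \<sigma>2 \<sigma>2' (v1 ?t) (?t$V3) \<noteq> 0"
    using t by (auto simp: domain_def base_domain_def)
  show "indep2 (z$A3) (z$B3)" "indep2 (z$V2) (z$V3)" "indep2 (z$V1) (z$V3)"
    using k minor2_cyclic3_rows_agree[OF cyclic(3) aV(4,5)] minor2_cyclic3_rows_agree[OF cyclic(1) aV(2,3)]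
      minor2_cyclic3_rows_agree[OF cyclic(2) aV(1,3)] indep2_of_minor2_nonzero by metis+
  show "det3 p q s (z$V1) (z$A3) (z$B3) = 0" "det3 p q s (z$V2) (z$A3) (z$B3) = 0"
    using det3_rows_agree[OF aV(1) aV(4,5)] det3_rows_agree[OF aV(2) aV(4,5)]
      det3_solve_row_cyclic[OF cyclic(3) rows_distinct k(1)] unfolding v1_def v2_def by simp_all
  show "det3 p q s (z$A1) (z$V2) (z$V3) = 0" "det3 p q s (z$B1) (z$V2) (z$V3) = 0"
    "det3 p q s (z$A2) (z$V1) (z$V3) = 0" "det3 p q s (z$B2) (z$V1) (z$V3) = 0"
    using det3_rows_agree[OF aA(1) aV(2,3)] det3_rows_agree[OF aA(2) aV(2,3)]
      det3_rows_agree[OF aA(3) aV(1,3)] det3_rows_agree[OF aA(4) aV(1,3)]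
      det3_solve_row_cyclic[OF cyclic(1) rows_distinct k(2)] det3_solve_row_cyclic[OF cyclic(2) rows_distinct k(3)]
    by simp_all
qed

lemma incident_of_row_data:
  assumes z: "z \<in> nbhd"
    and rows: "\<And>m. m \<notin> {9, 10, 11} \<Longrightarrow>
      z$m \<in> span3 (z$9) (z$10) (z$11) \<and> rows_agree p q s (z$m) (row_data (drop_coords dependent z) $ m)"
  shows "incident V1 V2 V3 A1 B1 A2 B2 A3 B3 z"
proof -
  let ?t = "drop_coords dependent z"
  have t: "?t \<in> domain" "?t \<in> base_domain" using z domain_subset by (auto simp: nbhd_def)
  have det: "det3 p q s (z$9) (z$10) (z$11) \<noteq> 0" using t(2) drop_plane by (simp add: base_domain_def)
  note on_line = span2_of_det3_zero_frame[OF det conjunct1[OF rows]]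
  note c = row_data_constraints[OF t(1) conjunct2[OF rows]]
  have i1: "indep2 (z$A1) (z$B1)" and i2: "indep2 (z$A2) (z$B2)"
    using z unfolding nbhd_def by (auto intro: indep2_of_minor2_nonzero)
  have "z$A1 \<in> span2 (z$V2) (z$V3)" "z$B1 \<in> span2 (z$V2) (z$V3)"
    "z$A2 \<in> span2 (z$V1) (z$V3)" "z$B2 \<in> span2 (z$V1) (z$V3)"
    using on_line c by blast+
  then have "z$V2 \<in> span2 (z$A1) (z$B1)" "z$V3 \<in> span2 (z$A1) (z$B1)"
    "z$V1 \<in> span2 (z$A2) (z$B2)" "z$V3 \<in> span2 (z$A2) (z$B2)"
    using span2_basis_exchange i1 i2 by blast+
  moreover have "z$V1 \<in> span2 (z$A3) (z$B3)" "z$V2 \<in> span2 (z$A3) (z$B3)"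
    using on_line c by blast+
  moreover have "z$m \<in> span3 (z$9) (z$10) (z$11)" if "m \<in> {A1, B1, A2, B2, A3, B3}" for m
    using rows that vector_label_iff by blast
  ultimately show ?thesis
    unfolding incident_def
    using indep2_nonzero[OF c(8)] indep2_nonzero[OF c(9)] i1 i2 c(7) indep3_of_det3_nonzero[OF det]
    by simp
qed

lemma y_in_nbhd: "y \<in> nbhd"
proof -
  let ?t = "drop_coords dependent y"
  have base: "?t \<in> base_domain"
    using det3_y minors_y(1) drop_plane[of _ y]
      minor2_cyclic3_rows_agree[OF cyclic(3) drop_rows_agree[of A3 y] drop_rows_agree[of B3 y]]
    unfolding base_domain_def by simp
  note V = vertices_recovered[OF incident_y base]
  have "minor2 \<sigma>1 \<sigma>1' (v2 ?t) (?t$V3) \<noteq> 0" "minor2 \<sigma>2 \<sigma>2' (v1 ?t) (?t$V3) \<noteq> 0"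
    using minors_y(2,3) minor2_cyclic3_rows_agree[OF cyclic(1) V(2) drop_rows_agree[of V3 y]]
      minor2_cyclic3_rows_agree[OF cyclic(2) V(1) drop_rows_agree[of V3 y]] by simp_all
  with base minors_y(4,5) show ?thesis unfolding nbhd_def domain_def by blast
qed

lemma open_nbhd: "open nbhd"
proof -
  have "open {z \<in> drop_coords dependent -` domain. minor2 k1 l1 (z$A1) (z$B1) \<noteq> 0}"
    by (rule open_holo_nonzero[OF open_drop_coords_vimage[OF open_domain]]) (auto intro!: holo_on_minor2)
  then have "open {z \<in> {z \<in> drop_coords dependent -` domain. minor2 k1 l1 (z$A1) (z$B1) \<noteq> 0}.
      minor2 k2 l2 (z$A2) (z$B2) \<noteq> 0}"
    by (rule open_holo_nonzero) (auto intro!: holo_on_minor2)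
  then show ?thesis unfolding nbhd_def by (simp add: conj_assoc)
qed

theorem complex_submanifold_at_incident: "complex_submanifold_at {z. incident V1 V2 V3 A1 B1 A2 B2 A3 B3 z} y"
proof (rule complex_submanifold_at_plane_chart[OF open_domain _ holo_row_data _ _ _ open_nbhd y_in_nbhd])
  show "det3 p q s (t$9) (t$10) (t$11) \<noteq> 0" if "t \<in> domain" for t
    using that by (simp add: domain_def base_domain_def)
  show "row_data t $ m $ r = t $ m $ r" if "(m, r) \<notin> dependent" "r \<in> {p, q, s}" for t m r
    using row_data_free[OF that] .
  show "m \<notin> {9, 10, 11}" if "(m, r) \<in> dependent" for m r
    using that by (simp add: dependent_def)
  show "(m, r) \<in> dependent" if "m \<notin> {9, 10, 11}" "r \<notin> {p, q, s}" for m r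
    using that by (simp add: dependent_def)
  show "drop_coords dependent z \<in> domain" if "z \<in> nbhd" for z
    using that by (simp add: nbhd_def)
  show "z \<in> {z. incident V1 V2 V3 A1 B1 A2 B2 A3 B3 z} \<longleftrightarrow> (\<forall>m. m \<notin> {9, 10, 11} \<longrightarrow>
      z$m \<in> span3 (z$9) (z$10) (z$11) \<and> rows_agree p q s (z$m) (row_data (drop_coords dependent z) $ m))"
    if "z \<in> nbhd" for z
  proof
    assume "z \<in> {z. incident V1 V2 V3 A1 B1 A2 B2 A3 B3 z}"
    then have inc: "incident V1 V2 V3 A1 B1 A2 B2 A3 B3 z" by simp
    have dom: "drop_coords dependent z \<in> domain" using that by (simp add: nbhd_def)
    show "\<forall>m. m \<notin> {9, 10, 11} \<longrightarrow>
        z$m \<in> span3 (z$9) (z$10) (z$11) \<and> rows_agree p q s (z$m) (row_data (drop_coords dependent z) $ m)"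
    proof (intro allI impI conjI)
      fix m :: 12 assume m: "m \<notin> {9, 10, 11}"
      then show "z$m \<in> span3 (z$9) (z$10) (z$11)"
        using incident_in_plane[OF inc] vector_label_iff by simp
      show "rows_agree p q s (z$m) (row_data (drop_coords dependent z) $ m)"
        using rows_agree_sym[OF row_data_recovers[OF inc dom m]] .
    qed
  next
    assume "\<forall>m. m \<notin> {9, 10, 11} \<longrightarrow>
        z$m \<in> span3 (z$9) (z$10) (z$11) \<and> rows_agree p q s (z$m) (row_data (drop_coords dependent z) $ m)"
    then show "z \<in> {z. incident V1 V2 V3 A1 B1 A2 B2 A3 B3 z}"
      using incident_of_row_data[OF that] by simp
  qed
  show "y \<in> {z. incident V1 V2 V3 A1 B1 A2 B2 A3 B3 z}"
    using incident_y by simp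
qed

end

lemma complex_submanifold_at_vertex_chart:
  fixes y :: "'n::finite frame"
  assumes labels: "distinct [V1, V2, V3, A1, B1, A2, B2, A3, B3, 9, 10, 11]"
    and preimage: "frame_preimage = {z :: 'n frame. incident V1 V2 V3 A1 B1 A2 B2 A3 B3 z}"
    and "y \<in> frame_preimage"
    and vertices: "vec.span {y$V3} \<noteq> vec.span {y$V1}" "vec.span {y$V3} \<noteq> vec.span {y$V2}"
  shows "complex_submanifold_at frame_preimage y"
proof -
  have y: "incident V1 V2 V3 A1 B1 A2 B2 A3 B3 y" using \<open>y \<in> frame_preimage\<close> preimage by blast
  then have distinct_vertices: "indep2 (y$V3) (y$V1)" "indep2 (y$V3) (y$V2)"
    using vertices indep2_of_span_singleton_neq unfolding incident_def by auto
  obtain p q s where det: "det3 p q s (y$9) (y$10) (y$11) \<noteq> 0"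
    using y indep3_obtain_det3 unfolding incident_def by blast
  have plane: "y$m \<in> span3 (y$9) (y$10) (y$11)" if "m \<in> {V1, V2, V3, A1, B1, A2, B2, A3, B3}" for m
    using incident_in_plane[OF y that] .
  obtain \<rho>3 \<sigma>3 \<sigma>3' where 3: "cyclic3 p q s \<rho>3 \<sigma>3 \<sigma>3'" "minor2 \<sigma>3 \<sigma>3' (y$A3) (y$B3) \<noteq> 0"
    using obtain_cyclic3_minor2[OF det plane plane] y unfolding incident_def by blast
  obtain \<rho>1 \<sigma>1 \<sigma>1' where 1: "cyclic3 p q s \<rho>1 \<sigma>1 \<sigma>1'" "minor2 \<sigma>1 \<sigma>1' (y$V2) (y$V3) \<noteq> 0"
    using obtain_cyclic3_minor2[OF det plane plane indep2_commute[OF distinct_vertices(2)]] by blast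
  obtain \<rho>2 \<sigma>2 \<sigma>2' where 2: "cyclic3 p q s \<rho>2 \<sigma>2 \<sigma>2'" "minor2 \<sigma>2 \<sigma>2' (y$V1) (y$V3) \<noteq> 0"
    using obtain_cyclic3_minor2[OF det plane plane indep2_commute[OF distinct_vertices(1)]] by blast
  obtain k1 l1 k2 l2 where "minor2 k1 l1 (y$A1) (y$B1) \<noteq> 0" "minor2 k2 l2 (y$A2) (y$B2) \<noteq> 0"
    using y indep2_obtain_minor2 unfolding incident_def by metis
  with labels y det 1 2 3 interpret vertex_chart V1 V2 V3 A1 B1 A2 B2 A3 B3 y p q s
    \<rho>1 \<sigma>1 \<sigma>1' \<rho>2 \<sigma>2 \<sigma>2' \<rho>3 \<sigma>3 \<sigma>3' k1 l1 k2 l2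
    by unfold_locales
  show ?thesis unfolding preimage by (rule complex_submanifold_at_incident)
qed

text \<open>Chart at a triangle whose side \<open>A3 B3\<close> differs from the two other sides, in a frame where
  \<open>B1, V3\<close> and \<open>B2, V3\<close> are independent. Free data: the plane, \<open>V3\<close>, \<open>B1\<close>, \<open>B2\<close>, the side \<open>A3 B3\<close>,
  all rows but \<open>\<rho>1\<close> of \<open>A1\<close> and \<open>\<rho>2\<close> of \<open>A2\<close> (solved so that \<open>V3\<close> lies on both sides), and one row
  \<open>e1\<close> of \<open>V1\<close> and \<open>e2\<close> of \<open>V2\<close>: the vertices \<open>V1, V2\<close> are the intersections of \<open>A3 B3\<close> with the
  two other sides, scaled to the given row.\<close>
locale side_chart = plane_chart +
  fixes \<rho>1 \<sigma>1 \<sigma>1' \<rho>2 \<sigma>2 \<sigma>2' e1 e2 k1 l1 k2 l2 k3 l3 :: "'n::finite"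
  assumes cyclic: "cyclic3 p q s \<rho>1 \<sigma>1 \<sigma>1'" "cyclic3 p q s \<rho>2 \<sigma>2 \<sigma>2'"
    and e_rows: "e1 = p \<or> e1 = q \<or> e1 = s" "e2 = p \<or> e2 = q \<or> e2 = s"
    and minors_y: "minor2 \<sigma>1 \<sigma>1' (y$B1) (y$V3) \<noteq> 0" "minor2 \<sigma>2 \<sigma>2' (y$B2) (y$V3) \<noteq> 0"
      "minor2 k1 l1 (y$A1) (y$B1) \<noteq> 0" "minor2 k2 l2 (y$A2) (y$B2) \<noteq> 0" "minor2 k3 l3 (y$A3) (y$B3) \<noteq> 0"
    and meets_y: "cross3 p q s (cross3 p q s (y$A2) (y$B2)) (cross3 p q s (y$A3) (y$B3)) $ e1 \<noteq> 0"
      "cross3 p q s (cross3 p q s (y$A1) (y$B1)) (cross3 p q s (y$A3) (y$B3)) $ e2 \<noteq> 0"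
begin

definition a1 :: "'n frame \<Rightarrow> complex^'n" where
  "a1 t = solve_row \<rho>1 \<sigma>1 \<sigma>1' (t$A1) (t$B1) (t$V3)"

definition a2 :: "'n frame \<Rightarrow> complex^'n" where
  "a2 t = solve_row \<rho>2 \<sigma>2 \<sigma>2' (t$A2) (t$B2) (t$V3)"

definition meet1 :: "'n frame \<Rightarrow> complex^'n" where
  "meet1 t = cross3 p q s (cross3 p q s (a2 t) (t$B2)) (cross3 p q s (t$A3) (t$B3))"

definition meet2 :: "'n frame \<Rightarrow> complex^'n" where
  "meet2 t = cross3 p q s (cross3 p q s (a1 t) (t$B1)) (cross3 p q s (t$A3) (t$B3))"

definition row_data :: "'n frame \<Rightarrow> 'n frame" where
  "row_data t = (\<chi> m. if m = V1 then (t$V1$e1 / meet1 t $ e1) *s meet1 t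
     else if m = V2 then (t$V2$e2 / meet2 t $ e2) *s meet2 t
     else if m = A1 then a1 t else if m = A2 then a2 t else t$m)"

definition dependent :: "(12 \<times> 'n) set" where
  "dependent = {(m, r). m \<notin> {9, 10, 11} \<and> (r \<notin> {p, q, s} \<or> (m = A1 \<and> r = \<rho>1) \<or> (m = A2 \<and> r = \<rho>2)
     \<or> (m = V1 \<and> r \<noteq> e1) \<or> (m = V2 \<and> r \<noteq> e2))}"

definition base_domain :: "'n frame set" where
  "base_domain = {t. det3 p q s (t$9) (t$10) (t$11) \<noteq> 0 \<and> minor2 \<sigma>1 \<sigma>1' (t$B1) (t$V3) \<noteq> 0
     \<and> minor2 \<sigma>2 \<sigma>2' (t$B2) (t$V3) \<noteq> 0}"

definition domain :: "'n frame set" where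
  "domain = {t \<in> base_domain. meet1 t $ e1 \<noteq> 0 \<and> meet2 t $ e2 \<noteq> 0}"

definition nbhd :: "'n frame set" where
  "nbhd = {z. drop_coords dependent z \<in> domain \<and> z$V1$e1 \<noteq> 0 \<and> z$V2$e2 \<noteq> 0
     \<and> minor2 k1 l1 (z$A1) (z$B1) \<noteq> 0 \<and> minor2 k2 l2 (z$A2) (z$B2) \<noteq> 0 \<and> minor2 k3 l3 (z$A3) (z$B3) \<noteq> 0}"

lemma cyclic_mem:
  "\<sigma>1 \<in> {p, q, s}" "\<sigma>1' \<in> {p, q, s}" "\<sigma>1 \<noteq> \<rho>1" "\<sigma>1' \<noteq> \<rho>1"
  "\<sigma>2 \<in> {p, q, s}" "\<sigma>2' \<in> {p, q, s}" "\<sigma>2 \<noteq> \<rho>2" "\<sigma>2' \<noteq> \<rho>2"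
  using cyclic3_mem[OF cyclic(1) rows_distinct] cyclic3_mem[OF cyclic(2) rows_distinct] by auto

lemma drop_plane: "m \<in> {9, 10, 11} \<Longrightarrow> drop_coords dependent z $ m = z $ m"
  by (auto simp: vec_eq_iff dependent_def)

lemma drop_rows_agree:
  assumes "m \<in> {V3, B1, B2, A3, B3}"
  shows "rows_agree p q s (drop_coords dependent z $ m) (z $ m)"
proof -
  have "m \<noteq> V1" "m \<noteq> V2" "m \<noteq> A1" "m \<noteq> A2"
    using assms label_neqs by auto
  then show ?thesis by (simp add: rows_agree_def dependent_def)
qed

lemma drop_nth:
  "drop_coords dependent z $ A1 $ \<sigma>1 = z $ A1 $ \<sigma>1" "drop_coords dependent z $ A1 $ \<sigma>1' = z $ A1 $ \<sigma>1'"
  "drop_coords dependent z $ A2 $ \<sigma>2 = z $ A2 $ \<sigma>2" "drop_coords dependent z $ A2 $ \<sigma>2' = z $ A2 $ \<sigma>2'"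
  "drop_coords dependent z $ V1 $ e1 = z $ V1 $ e1" "drop_coords dependent z $ V2 $ e2 = z $ V2 $ e2"
proof -
  have "A1 \<noteq> A2" "A1 \<noteq> V1" "A1 \<noteq> V2" "A2 \<noteq> V1" "A2 \<noteq> V2" "V1 \<noteq> V2"
    using label_neqs by auto
  then show "drop_coords dependent z $ A1 $ \<sigma>1 = z $ A1 $ \<sigma>1" "drop_coords dependent z $ A1 $ \<sigma>1' = z $ A1 $ \<sigma>1'"
    "drop_coords dependent z $ A2 $ \<sigma>2 = z $ A2 $ \<sigma>2" "drop_coords dependent z $ A2 $ \<sigma>2' = z $ A2 $ \<sigma>2'"
    "drop_coords dependent z $ V1 $ e1 = z $ V1 $ e1" "drop_coords dependent z $ V2 $ e2 = z $ V2 $ e2"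
    using cyclic_mem e_rows by (auto simp: dependent_def)
qed

lemma sides_recovered:
  assumes "incident V1 V2 V3 A1 B1 A2 B2 A3 B3 z" "drop_coords dependent z \<in> base_domain"
  shows "rows_agree p q s (a1 (drop_coords dependent z)) (z$A1)"
    "rows_agree p q s (a2 (drop_coords dependent z)) (z$A2)"
proof -
  note agree = drop_rows_agree[of B1 z] drop_rows_agree[of B2 z] drop_rows_agree[of V3 z]
  have "minor2 \<sigma>1 \<sigma>1' (z$B1) (z$V3) \<noteq> 0" "minor2 \<sigma>2 \<sigma>2' (z$B2) (z$V3) \<noteq> 0"
    using assms(2) minor2_cyclic3_rows_agree[OF cyclic(1) agree(1,3)]
      minor2_cyclic3_rows_agree[OF cyclic(2) agree(2,3)] unfolding base_domain_def by simp_all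
  moreover have "det3 p q s (z$A1) (z$B1) (z$V3) = 0" "det3 p q s (z$A2) (z$B2) (z$V3) = 0"
    using assms(1) det3_span2_zero det3_rotate_args unfolding incident_def by metis+
  ultimately show "rows_agree p q s (a1 (drop_coords dependent z)) (z$A1)"
    "rows_agree p q s (a2 (drop_coords dependent z)) (z$A2)"
    unfolding a1_def a2_def
    using solve_row_recovers[OF cyclic(1) agree(1,3) drop_nth(1,2)]
      solve_row_recovers[OF cyclic(2) agree(2,3) drop_nth(3,4)] by simp_all
qed

lemma meets_recovered:
  assumes "incident V1 V2 V3 A1 B1 A2 B2 A3 B3 z" "drop_coords dependent z \<in> base_domain"
  shows "rows_agree p q s (meet1 (drop_coords dependent z))
      (cross3 p q s (cross3 p q s (z$A2) (z$B2)) (cross3 p q s (z$A3) (z$B3)))"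
    "rows_agree p q s (meet2 (drop_coords dependent z))
      (cross3 p q s (cross3 p q s (z$A1) (z$B1)) (cross3 p q s (z$A3) (z$B3)))"
  unfolding meet1_def meet2_def
  by (intro cross3_rows_agree sides_recovered[OF assms] drop_rows_agree; simp)+

lemma row_data_recovers:
  assumes "incident V1 V2 V3 A1 B1 A2 B2 A3 B3 z" "drop_coords dependent z \<in> domain" "m \<notin> {9, 10, 11}"
  shows "rows_agree p q s (row_data (drop_coords dependent z) $ m) (z$m)"
proof -
  let ?t = "drop_coords dependent z"
  have base: "?t \<in> base_domain" using assms(2) by (simp add: domain_def)
  have "meet1 ?t $ e1 \<noteq> 0" "meet2 ?t $ e2 \<noteq> 0" using assms(2) by (simp_all add: domain_def)
  then have "rows_agree p q s ((z$V1$e1 / meet1 ?t $ e1) *s meet1 ?t) (z$V1)"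
    "rows_agree p q s ((z$V2$e2 / meet2 ?t $ e2) *s meet2 ?t) (z$V2)"
    using rows_agree_scaled_meet[OF rows_distinct meets_recovered(1)[OF assms(1) base] _ e_rows(1)]
      rows_agree_scaled_meet[OF rows_distinct meets_recovered(2)[OF assms(1) base] _ e_rows(2)]
      assms(1) unfolding incident_def by simp_all
  moreover have "m \<in> {V1, V2, V3, A1, B1, A2, B2, A3, B3}" using assms(3) vector_label_iff by blast
  ultimately show ?thesis
    using sides_recovered[OF assms(1) base] drop_rows_agree[of m z] drop_nth(5,6) label_neqs
    by (auto simp: row_data_def)
qed

lemma vertices_rows_nonzero: "y$V1$e1 \<noteq> 0" "y$V2$e2 \<noteq> 0"
proof -
  define g1 where "g1 = cross3 p q s (cross3 p q s (y$A2) (y$B2)) (cross3 p q s (y$A3) (y$B3))"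
  define g2 where "g2 = cross3 p q s (cross3 p q s (y$A1) (y$B1)) (cross3 p q s (y$A3) (y$B3))"
  have "rows_agree p q s ((y$V1$e1 / g1 $ e1) *s g1) (y$V1)" "rows_agree p q s ((y$V2$e2 / g2 $ e2) *s g2) (y$V2)"
    using rows_agree_scaled_meet[OF rows_distinct rows_agree_refl meets_y(1) e_rows(1)]
      rows_agree_scaled_meet[OF rows_distinct rows_agree_refl meets_y(2) e_rows(2)]
      incident_y unfolding incident_def g1_def g2_def by simp_all
  moreover have "y$m \<noteq> 0" "y$m \<in> span3 (y$9) (y$10) (y$11)" if "m \<in> {V1, V2}" for m
    using incident_y incident_in_plane[OF incident_y] that unfolding incident_def by auto
  ultimately show "y$V1$e1 \<noteq> 0" "y$V2$e2 \<noteq> 0"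
    using eq_if_rows_agree_in_span3[OF det3_y vec.span_zero] by force+
qed

lemma open_base_domain: "open base_domain"
proof -
  have "open {t :: 'n frame \<in> UNIV. det3 p q s (t$9) (t$10) (t$11) \<noteq> 0}"
    by (rule open_holo_nonzero) (auto intro!: holo_on_det3)
  then have "open {t \<in> {t :: 'n frame \<in> UNIV. det3 p q s (t$9) (t$10) (t$11) \<noteq> 0}.
      minor2 \<sigma>1 \<sigma>1' (t$B1) (t$V3) \<noteq> 0}"
    by (rule open_holo_nonzero) (auto intro!: holo_on_minor2)
  then have "open {t \<in> {t \<in> {t :: 'n frame \<in> UNIV. det3 p q s (t$9) (t$10) (t$11) \<noteq> 0}.
      minor2 \<sigma>1 \<sigma>1' (t$B1) (t$V3) \<noteq> 0}. minor2 \<sigma>2 \<sigma>2' (t$B2) (t$V3) \<noteq> 0}"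
    by (rule open_holo_nonzero) (auto intro!: holo_on_minor2)
  then show ?thesis unfolding base_domain_def by (simp add: conj_assoc)
qed

lemma holo_sides: "holo_vec_on base_domain a1" "holo_vec_on base_domain a2"
  unfolding a1_def a2_def by (auto intro!: holo_vec_on_solve_row simp: base_domain_def)

lemma holo_meets: "holo_vec_on base_domain meet1" "holo_vec_on base_domain meet2"
  unfolding meet1_def meet2_def by (auto intro!: holo_vec_on_cross3 holo_sides)

lemma domain_subset: "domain \<subseteq> base_domain"
  by (auto simp: domain_def)

lemma open_domain: "open domain"
proof -
  have "open {t \<in> base_domain. meet1 t $ e1 \<noteq> 0}"
    by (rule open_holo_nonzero[OF open_base_domain]) (use holo_meets in \<open>simp add: holo_vec_on_def\<close>)
  then have "open {t \<in> {t \<in> base_domain. meet1 t $ e1 \<noteq> 0}. meet2 t $ e2 \<noteq> 0}"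
    by (rule open_holo_nonzero) (use holo_meets in \<open>auto simp: holo_vec_on_def intro: holo_on_subset\<close>)
  then show ?thesis unfolding domain_def by (simp add: conj_assoc)
qed

lemma holo_row_data: "holo_vec_on domain (\<lambda>t. row_data t $ m)"
proof -
  note sub = holo_vec_on_subset[OF _ domain_subset]
  have "holo_on domain (\<lambda>t. t$V1$e1 / meet1 t $ e1)" "holo_on domain (\<lambda>t. t$V2$e2 / meet2 t $ e2)"
    using sub[OF holo_meets(1)] sub[OF holo_meets(2)] unfolding holo_vec_on_def
    by (auto intro!: holo_on_divide simp: domain_def)
  then show ?thesis
    using sub[OF holo_meets(1)] sub[OF holo_meets(2)] sub[OF holo_sides(1)] sub[OF holo_sides(2)]
    unfolding row_data_def vec_lambda_beta by (intro holo_vec_on_if holo_vec_on_scale) auto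
qed

lemma row_data_free:
  assumes "t \<in> domain" "(m, r) \<notin> dependent" "r \<in> {p, q, s}"
  shows "row_data t $ m $ r = t $ m $ r"
proof -
  have "m \<notin> {9, 10, 11} \<Longrightarrow> m = A1 \<Longrightarrow> r \<noteq> \<rho>1" "m \<notin> {9, 10, 11} \<Longrightarrow> m = A2 \<Longrightarrow> r \<noteq> \<rho>2"
    "m \<notin> {9, 10, 11} \<Longrightarrow> m = V1 \<Longrightarrow> r = e1" "m \<notin> {9, 10, 11} \<Longrightarrow> m = V2 \<Longrightarrow> r = e2"
    using assms(2,3) unfolding dependent_def by auto
  moreover have "meet1 t $ e1 \<noteq> 0" "meet2 t $ e2 \<noteq> 0" using assms(1) by (simp_all add: domain_def)
  ultimately show ?thesis
    using labels_not_plane label_neqs by (auto simp: row_data_def a1_def a2_def solve_row_nth_other)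
qed

lemma row_data_constraints:
  assumes t: "drop_coords dependent z \<in> domain"
    and agree: "\<And>m. m \<notin> {9, 10, 11} \<Longrightarrow> rows_agree p q s (z$m) (row_data (drop_coords dependent z) $ m)"
  shows "det3 p q s (z$V3) (z$A1) (z$B1) = 0" "det3 p q s (z$V3) (z$A2) (z$B2) = 0"
    "det3 p q s (z$V1) (z$A2) (z$B2) = 0" "det3 p q s (z$V1) (z$A3) (z$B3) = 0"
    "det3 p q s (z$V2) (z$A1) (z$B1) = 0" "det3 p q s (z$V2) (z$A3) (z$B3) = 0"
    "indep2 (z$B1) (z$V3)"
proof -
  let ?t = "drop_coords dependent z"
  note agree' = agree[OF labels_not_plane(1)] agree[OF labels_not_plane(2)] agree[OF labels_not_plane(3)]
    agree[OF labels_not_plane(4)] agree[OF labels_not_plane(5)] agree[OF labels_not_plane(6)]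
    agree[OF labels_not_plane(7)] agree[OF labels_not_plane(8)] agree[OF labels_not_plane(9)]
  have aV: "rows_agree p q s (z$V1) ((?t$V1$e1 / meet1 ?t $ e1) *s meet1 ?t)"
    "rows_agree p q s (z$V2) ((?t$V2$e2 / meet2 ?t $ e2) *s meet2 ?t)"
    "rows_agree p q s (z$V3) (?t$V3)"
    using agree' label_neqs by (simp_all add: row_data_def)
  have aA: "rows_agree p q s (z$A1) (a1 ?t)" "rows_agree p q s (z$B1) (?t$B1)"
    "rows_agree p q s (z$A2) (a2 ?t)" "rows_agree p q s (z$B2) (?t$B2)"
    "rows_agree p q s (z$A3) (?t$A3)" "rows_agree p q s (z$B3) (?t$B3)"
    using agree' label_neqs by (simp_all add: row_data_def)
  have k: "minor2 \<sigma>1 \<sigma>1' (?t$B1) (?t$V3) \<noteq> 0" "minor2 \<sigma>2 \<sigma>2' (?t$B2) (?t$V3) \<noteq> 0"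
    using t by (auto simp: domain_def base_domain_def)
  show "indep2 (z$B1) (z$V3)"
    using k(1) minor2_cyclic3_rows_agree[OF cyclic(1) aA(2) aV(3)] indep2_of_minor2_nonzero by metis
  show "det3 p q s (z$V3) (z$A1) (z$B1) = 0" "det3 p q s (z$V3) (z$A2) (z$B2) = 0"
    using det3_rows_agree[OF aA(1,2) aV(3)] det3_rows_agree[OF aA(3,4) aV(3)]
      det3_solve_row_cyclic[OF cyclic(1) rows_distinct k(1)] det3_solve_row_cyclic[OF cyclic(2) rows_distinct k(2)]
      det3_rotate_args[of p q s "z$V3"]
    unfolding a1_def a2_def by simp_all
  have cross: "rows_agree p q s (cross3 p q s (z$A1) (z$B1)) (cross3 p q s (a1 ?t) (?t$B1))"
    "rows_agree p q s (cross3 p q s (z$A2) (z$B2)) (cross3 p q s (a2 ?t) (?t$B2))"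
    "rows_agree p q s (cross3 p q s (z$A3) (z$B3)) (cross3 p q s (?t$A3) (?t$B3))"
    using cross3_rows_agree aA by blast+
  show "det3 p q s (z$V1) (z$A2) (z$B2) = 0" "det3 p q s (z$V1) (z$A3) (z$B3) = 0"
    "det3 p q s (z$V2) (z$A1) (z$B1) = 0" "det3 p q s (z$V2) (z$A3) (z$B3) = 0"
    using dot3_rows_agree[OF aV(1) cross(2)] dot3_rows_agree[OF aV(1) cross(3)]
      dot3_rows_agree[OF aV(2) cross(1)] dot3_rows_agree[OF aV(2) cross(3)]
    by (simp_all add: det3_eq_dot3_cross3[OF rows_distinct] meet1_def meet2_def
        dot3_scaled_cross3_left[OF rows_distinct] dot3_scaled_cross3_right[OF rows_distinct])
qed

lemma incident_of_row_data:
  assumes z: "z \<in> nbhd"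
    and rows: "\<And>m. m \<notin> {9, 10, 11} \<Longrightarrow>
      z$m \<in> span3 (z$9) (z$10) (z$11) \<and> rows_agree p q s (z$m) (row_data (drop_coords dependent z) $ m)"
  shows "incident V1 V2 V3 A1 B1 A2 B2 A3 B3 z"
proof -
  let ?t = "drop_coords dependent z"
  have t: "?t \<in> domain" "?t \<in> base_domain" using z domain_subset by (auto simp: nbhd_def)
  have det: "det3 p q s (z$9) (z$10) (z$11) \<noteq> 0" using t(2) drop_plane by (simp add: base_domain_def)
  note on_line = span2_of_det3_zero_frame[OF det conjunct1[OF rows]]
  note c = row_data_constraints[OF t(1) conjunct2[OF rows]]
  have i: "indep2 (z$A1) (z$B1)" "indep2 (z$A2) (z$B2)" "indep2 (z$A3) (z$B3)"
    using z unfolding nbhd_def by (auto intro: indep2_of_minor2_nonzero)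
  then have "z$V3 \<in> span2 (z$A1) (z$B1)" "z$V3 \<in> span2 (z$A2) (z$B2)"
    "z$V1 \<in> span2 (z$A2) (z$B2)" "z$V1 \<in> span2 (z$A3) (z$B3)"
    "z$V2 \<in> span2 (z$A1) (z$B1)" "z$V2 \<in> span2 (z$A3) (z$B3)"
    using on_line c by blast+
  moreover have "z$V1 \<noteq> 0" "z$V2 \<noteq> 0" using z unfolding nbhd_def by auto
  moreover have "z$m \<in> span3 (z$9) (z$10) (z$11)" if "m \<in> {A1, B1, A2, B2, A3, B3}" for m
    using rows that vector_label_iff by blast
  ultimately show ?thesis
    unfolding incident_def using indep2_nonzero[OF c(7)] i indep3_of_det3_nonzero[OF det] by simp
qed

lemma y_in_nbhd: "y \<in> nbhd"
proof -
  let ?t = "drop_coords dependent y"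
  note agree = drop_rows_agree[of B1 y] drop_rows_agree[of B2 y] drop_rows_agree[of V3 y]
  have base: "?t \<in> base_domain"
    using det3_y minors_y(1,2) drop_plane[of _ y]
      minor2_cyclic3_rows_agree[OF cyclic(1) agree(1,3)] minor2_cyclic3_rows_agree[OF cyclic(2) agree(2,3)]
    unfolding base_domain_def by simp
  have "meet1 ?t $ e1 \<noteq> 0" "meet2 ?t $ e2 \<noteq> 0"
    using meets_recovered[OF incident_y base] meets_y e_rows unfolding rows_agree_def by auto
  with base minors_y(3-5) vertices_rows_nonzero show ?thesis unfolding nbhd_def domain_def by blast
qed

lemma open_nbhd: "open nbhd"
proof -
  have "open {z \<in> drop_coords dependent -` domain. z$V1$e1 \<noteq> 0}"
    by (rule open_holo_nonzero[OF open_drop_coords_vimage[OF open_domain]]) simp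
  then have "open {z \<in> {z \<in> drop_coords dependent -` domain. z$V1$e1 \<noteq> 0}. z$V2$e2 \<noteq> 0}"
    by (rule open_holo_nonzero) simp
  then have "open {z \<in> {z \<in> {z \<in> drop_coords dependent -` domain. z$V1$e1 \<noteq> 0}. z$V2$e2 \<noteq> 0}.
      minor2 k1 l1 (z$A1) (z$B1) \<noteq> 0}"
    by (rule open_holo_nonzero) (auto intro!: holo_on_minor2)
  then have "open {z \<in> {z \<in> {z \<in> {z \<in> drop_coords dependent -` domain. z$V1$e1 \<noteq> 0}. z$V2$e2 \<noteq> 0}.
      minor2 k1 l1 (z$A1) (z$B1) \<noteq> 0}. minor2 k2 l2 (z$A2) (z$B2) \<noteq> 0}"
    by (rule open_holo_nonzero) (auto intro!: holo_on_minor2)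
  then have "open {z \<in> {z \<in> {z \<in> {z \<in> {z \<in> drop_coords dependent -` domain. z$V1$e1 \<noteq> 0}. z$V2$e2 \<noteq> 0}.
      minor2 k1 l1 (z$A1) (z$B1) \<noteq> 0}. minor2 k2 l2 (z$A2) (z$B2) \<noteq> 0}. minor2 k3 l3 (z$A3) (z$B3) \<noteq> 0}"
    by (rule open_holo_nonzero) (auto intro!: holo_on_minor2)
  then show ?thesis unfolding nbhd_def by (simp add: conj_assoc)
qed

theorem complex_submanifold_at_incident: "complex_submanifold_at {z. incident V1 V2 V3 A1 B1 A2 B2 A3 B3 z} y"
proof (rule complex_submanifold_at_plane_chart[OF open_domain _ holo_row_data _ _ _ open_nbhd y_in_nbhd])
  show "det3 p q s (t$9) (t$10) (t$11) \<noteq> 0" if "t \<in> domain" for t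
    using that by (simp add: domain_def base_domain_def)
  show "row_data t $ m $ r = t $ m $ r" if "t \<in> domain" "(m, r) \<notin> dependent" "r \<in> {p, q, s}" for t m r
    using row_data_free[OF that] .
  show "m \<notin> {9, 10, 11}" if "(m, r) \<in> dependent" for m r
    using that by (simp add: dependent_def)
  show "(m, r) \<in> dependent" if "m \<notin> {9, 10, 11}" "r \<notin> {p, q, s}" for m r
    using that by (simp add: dependent_def)
  show "drop_coords dependent z \<in> domain" if "z \<in> nbhd" for z
    using that by (simp add: nbhd_def)
  show "z \<in> {z. incident V1 V2 V3 A1 B1 A2 B2 A3 B3 z} \<longleftrightarrow> (\<forall>m. m \<notin> {9, 10, 11} \<longrightarrow>
      z$m \<in> span3 (z$9) (z$10) (z$11) \<and> rows_agree p q s (z$m) (row_data (drop_coords dependent z) $ m))"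
    if "z \<in> nbhd" for z
  proof
    assume "z \<in> {z. incident V1 V2 V3 A1 B1 A2 B2 A3 B3 z}"
    then have inc: "incident V1 V2 V3 A1 B1 A2 B2 A3 B3 z" by simp
    have dom: "drop_coords dependent z \<in> domain" using that by (simp add: nbhd_def)
    show "\<forall>m. m \<notin> {9, 10, 11} \<longrightarrow>
        z$m \<in> span3 (z$9) (z$10) (z$11) \<and> rows_agree p q s (z$m) (row_data (drop_coords dependent z) $ m)"
    proof (intro allI impI conjI)
      fix m :: 12 assume m: "m \<notin> {9, 10, 11}"
      then show "z$m \<in> span3 (z$9) (z$10) (z$11)"
        using incident_in_plane[OF inc] vector_label_iff by simp
      show "rows_agree p q s (z$m) (row_data (drop_coords dependent z) $ m)"
        using rows_agree_sym[OF row_data_recovers[OF inc dom m]] .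
    qed
  next
    assume "\<forall>m. m \<notin> {9, 10, 11} \<longrightarrow>
        z$m \<in> span3 (z$9) (z$10) (z$11) \<and> rows_agree p q s (z$m) (row_data (drop_coords dependent z) $ m)"
    then show "z \<in> {z. incident V1 V2 V3 A1 B1 A2 B2 A3 B3 z}"
      using incident_of_row_data[OF that] by simp
  qed
  show "y \<in> {z. incident V1 V2 V3 A1 B1 A2 B2 A3 B3 z}"
    using incident_y by simp
qed

end

lemma complex_submanifold_at_side_chart_of_indep:
  fixes y :: "'n::finite frame"
  assumes labels: "distinct [V1, V2, V3, A1, B1, A2, B2, A3, B3, 9, 10, 11]"
    and y: "incident V1 V2 V3 A1 B1 A2 B2 A3 B3 y"
    and distinct_sides: "span2 (y$A1) (y$B1) \<noteq> span2 (y$A3) (y$B3)" "span2 (y$A2) (y$B2) \<noteq> span2 (y$A3) (y$B3)"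
    and B_indep: "indep2 (y$B1) (y$V3)" "indep2 (y$B2) (y$V3)"
  shows "complex_submanifold_at {z. incident V1 V2 V3 A1 B1 A2 B2 A3 B3 z} y"
proof -
  obtain p q s where det: "det3 p q s (y$9) (y$10) (y$11) \<noteq> 0"
    using y indep3_obtain_det3 unfolding incident_def by blast
  have plane: "y$m \<in> span3 (y$9) (y$10) (y$11)" if "m \<in> {V1, V2, V3, A1, B1, A2, B2, A3, B3}" for m
    using incident_in_plane[OF y that] .
  have indep: "indep2 (y$A1) (y$B1)" "indep2 (y$A2) (y$B2)" "indep2 (y$A3) (y$B3)"
    using y unfolding incident_def by simp_all
  obtain \<rho>1 \<sigma>1 \<sigma>1' where 1: "cyclic3 p q s \<rho>1 \<sigma>1 \<sigma>1'" "minor2 \<sigma>1 \<sigma>1' (y$B1) (y$V3) \<noteq> 0"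
    using obtain_cyclic3_minor2[OF det plane plane B_indep(1)] by blast
  obtain \<rho>2 \<sigma>2 \<sigma>2' where 2: "cyclic3 p q s \<rho>2 \<sigma>2 \<sigma>2'" "minor2 \<sigma>2 \<sigma>2' (y$B2) (y$V3) \<noteq> 0"
    using obtain_cyclic3_minor2[OF det plane plane B_indep(2)] by blast
  obtain e1 where e1: "e1 = p \<or> e1 = q \<or> e1 = s"
    "cross3 p q s (cross3 p q s (y$A2) (y$B2)) (cross3 p q s (y$A3) (y$B3)) $ e1 \<noteq> 0"
    using cross3_cross3_nonzero[OF det plane plane plane plane indep(2,3) distinct_sides(2)] by blast
  obtain e2 where e2: "e2 = p \<or> e2 = q \<or> e2 = s"
    "cross3 p q s (cross3 p q s (y$A1) (y$B1)) (cross3 p q s (y$A3) (y$B3)) $ e2 \<noteq> 0"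
    using cross3_cross3_nonzero[OF det plane plane plane plane indep(1,3) distinct_sides(1)] by blast
  obtain k1 l1 k2 l2 k3 l3 where "minor2 k1 l1 (y$A1) (y$B1) \<noteq> 0" "minor2 k2 l2 (y$A2) (y$B2) \<noteq> 0"
      "minor2 k3 l3 (y$A3) (y$B3) \<noteq> 0"
    using indep indep2_obtain_minor2 by metis
  with labels y det 1 2 e1 e2 interpret side_chart V1 V2 V3 A1 B1 A2 B2 A3 B3 y p q s
    \<rho>1 \<sigma>1 \<sigma>1' \<rho>2 \<sigma>2 \<sigma>2' e1 e2 k1 l1 k2 l2 k3 l3
    by unfold_locales
  show ?thesis by (rule complex_submanifold_at_incident)
qed

text \<open>The hypothesis on \<open>B1, B2\<close> in the side chart is met after possibly swapping the basis vectors
  of the sides \<open>A1 B1\<close> and \<open>A2 B2\<close>.\<close>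
lemma complex_submanifold_at_side_chart:
  fixes y :: "'n::finite frame"
  assumes labels: "distinct [V1, V2, V3, A1, B1, A2, B2, A3, B3, 9, 10, 11]"
    and preimage: "frame_preimage = {z :: 'n frame. incident V1 V2 V3 A1 B1 A2 B2 A3 B3 z}"
    and "y \<in> frame_preimage"
    and distinct_sides: "span2 (y$A1) (y$B1) \<noteq> span2 (y$A3) (y$B3)" "span2 (y$A2) (y$B2) \<noteq> span2 (y$A3) (y$B3)"
  shows "complex_submanifold_at frame_preimage y"
proof -
  have y: "incident V1 V2 V3 A1 B1 A2 B2 A3 B3 y" using \<open>y \<in> frame_preimage\<close> preimage by blast
  have swapped_sides: "span2 (y$B1) (y$A1) \<noteq> span2 (y$A3) (y$B3)" "span2 (y$B2) (y$A2) \<noteq> span2 (y$A3) (y$B3)"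
    using distinct_sides by (simp_all add: insert_commute)
  have "indep2 (y$B1) (y$V3) \<or> indep2 (y$A1) (y$V3)" "indep2 (y$B2) (y$V3) \<or> indep2 (y$A2) (y$V3)"
    using indep2_exchange y unfolding incident_def by blast+
  then consider "indep2 (y$B1) (y$V3)" "indep2 (y$B2) (y$V3)" | "indep2 (y$B1) (y$V3)" "indep2 (y$A2) (y$V3)"
    | "indep2 (y$A1) (y$V3)" "indep2 (y$B2) (y$V3)" | "indep2 (y$A1) (y$V3)" "indep2 (y$A2) (y$V3)"
    by blast
  moreover have "distinct [V1, V2, V3, A1, B1, B2, A2, A3, B3, 9, 10, 11]"
    "distinct [V1, V2, V3, B1, A1, A2, B2, A3, B3, 9, 10, 11]"
    "distinct [V1, V2, V3, B1, A1, B2, A2, A3, B3, 9, 10, 11]"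
    using labels by auto
  moreover have "incident V1 V2 V3 A1 B1 B2 A2 A3 B3 z \<longleftrightarrow> incident V1 V2 V3 A1 B1 A2 B2 A3 B3 z"
    "incident V1 V2 V3 B1 A1 A2 B2 A3 B3 z \<longleftrightarrow> incident V1 V2 V3 A1 B1 A2 B2 A3 B3 z"
    "incident V1 V2 V3 B1 A1 B2 A2 A3 B3 z \<longleftrightarrow> incident V1 V2 V3 A1 B1 A2 B2 A3 B3 z" for z :: "'n frame"
    using incident_swap1 incident_swap2 by metis+
  ultimately have "complex_submanifold_at {z. incident V1 V2 V3 A1 B1 A2 B2 A3 B3 z} y"
    using complex_submanifold_at_side_chart_of_indep[OF labels y distinct_sides]
      complex_submanifold_at_side_chart_of_indep[of V1 V2 V3 A1 B1 B2 A2 A3 B3 y]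
      complex_submanifold_at_side_chart_of_indep[of V1 V2 V3 B1 A1 A2 B2 A3 B3 y]
      complex_submanifold_at_side_chart_of_indep[of V1 V2 V3 B1 A1 B2 A2 A3 B3 y]
      y distinct_sides swapped_sides
    by (cases; simp)
  then show ?thesis by (subst preimage)
qed

section \<open>Singularity at degenerate triangles\<close>

lemma cscale_of_real: "cscale (of_real r) x = r *\<^sub>R x"
  by (simp add: vec_eq_iff cscale_def) (simp add: scaleR_conv_of_real)

lemma csubspace_scaleR: "csubspace T \<Longrightarrow> x \<in> T \<Longrightarrow> r *\<^sub>R x \<in> T"
  unfolding csubspace_def using cscale_of_real by metis

lemma csubspace_add: "csubspace T \<Longrightarrow> x \<in> T \<Longrightarrow> y \<in> T \<Longrightarrow> x + y \<in> T"
  unfolding csubspace_def by blast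

lemma csubspace_diff: "csubspace T \<Longrightarrow> x \<in> T \<Longrightarrow> y \<in> T \<Longrightarrow> x - y \<in> T"
  using csubspace_add[of T x "(-1) *\<^sub>R y"] csubspace_scaleR[of T y "-1"] by simp

lemma csubspace_decomposition_unique:
  assumes "csubspace T" "csubspace T'" "T \<inter> T' = {0}"
    and "a \<in> T" "b \<in> T" "u - a \<in> T'" "u - b \<in> T'"
  shows "a = b"
proof -
  have "a - b \<in> T" using csubspace_diff[OF assms(1,4,5)] .
  moreover have "(u - b) - (u - a) \<in> T'" using csubspace_diff[OF assms(2,7,6)] .
  then have "a - b \<in> T'" by simp
  ultimately have "a - b \<in> T \<inter> T'" by blast
  then show ?thesis using assms(3) by simp
qed

lemma has_vector_derivative_along_line:
  assumes "(h has_derivative L) (at t0)"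
  shows "((\<lambda>s::real. h (t0 + s *\<^sub>R \<tau>)) has_vector_derivative L \<tau>) (at 0)"
proof -
  have "((\<lambda>s::real. t0 + s *\<^sub>R \<tau>) has_derivative (\<lambda>s. s *\<^sub>R \<tau>)) (at 0)"
    by (auto intro!: derivative_eq_intros)
  from diff_chain_at[OF this] assms have "((h \<circ> (\<lambda>s. t0 + s *\<^sub>R \<tau>)) has_derivative (L \<circ> (\<lambda>s. s *\<^sub>R \<tau>))) (at 0)"
    by simp
  moreover have "L \<circ> (\<lambda>s. s *\<^sub>R \<tau>) = (\<lambda>s. s *\<^sub>R L \<tau>)"
    using linear_scale[OF has_derivative_linear[OF assms]] by (auto simp: fun_eq_iff)
  ultimately show ?thesis unfolding has_vector_derivative_def by (simp add: o_def)
qed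

lemma isCont_obtain_interval:
  fixes f :: "real \<Rightarrow> 'a::metric_space"
  assumes "isCont f 0" "open U" "f 0 \<in> U"
  obtains \<delta> where "\<delta> > 0" "\<And>s. \<bar>s\<bar> < \<delta> \<Longrightarrow> f s \<in> U"
proof -
  obtain \<epsilon> where \<epsilon>: "\<epsilon> > 0" "ball (f 0) \<epsilon> \<subseteq> U" using assms(2,3) open_contains_ball by blast
  with assms(1) obtain \<delta> where "\<delta> > 0" "\<And>s. dist s 0 < \<delta> \<Longrightarrow> dist (f s) (f 0) < \<epsilon>"
    unfolding continuous_at_eps_delta by blast
  moreover have "f s \<in> U" if "dist (f s) (f 0) < \<epsilon>" for s
    using that \<epsilon>(2) by (auto simp: dist_commute)
  ultimately show ?thesis using that by (simp add: dist_real_def)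
qed

lemma graph_line_affine:
  fixes h :: "'n::finite frame \<Rightarrow> 'n frame"
  assumes U: "open U" "y \<in> U" and T: "csubspace T" "csubspace T'" "T \<inter> T' = {0}"
    and hT: "\<forall>t\<in>T \<inter> W. h t \<in> T'" and SU: "S \<inter> U = {t + h t |t. t \<in> T \<inter> W} \<inter> U"
    and t0: "t0 \<in> T" "t0 \<in> W" "y = t0 + h t0"
    and line: "\<And>s::real. y + s *\<^sub>R u \<in> S"
  obtains \<delta> \<tau> where "\<delta> > 0" "\<tau> \<in> T" "\<And>s. \<bar>s\<bar> < \<delta> \<Longrightarrow> h (t0 + s *\<^sub>R \<tau>) = h t0 + s *\<^sub>R (u - \<tau>)"
proof -
  have "isCont (\<lambda>s::real. y + s *\<^sub>R u) 0" by (intro continuous_intros)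
  from isCont_obtain_interval[OF this U(1)] U(2)
  obtain \<delta> where \<delta>_pos: "\<delta> > 0" and in_U: "\<And>s. \<bar>s\<bar> < \<delta> \<Longrightarrow> y + s *\<^sub>R u \<in> U"
    by auto
  define ts where "ts s = (SOME t. t \<in> T \<inter> W \<and> y + s *\<^sub>R u = t + h t)" for s
  define dec where "dec s = (1/s) *\<^sub>R (ts s - t0)" for s
  have ex: "\<exists>t. t \<in> T \<inter> W \<and> y + s *\<^sub>R u = t + h t" if "\<bar>s\<bar> < \<delta>" for s
    using in_U[OF that] line[of s] SU by blast
  have ts: "ts s \<in> T \<inter> W \<and> y + s *\<^sub>R u = ts s + h (ts s)" if "\<bar>s\<bar> < \<delta>" for s
    unfolding ts_def using someI_ex[OF ex[OF that]] .
  have dec: "dec s \<in> T" "u - dec s \<in> T'" if "\<bar>s\<bar> < \<delta>" "s \<noteq> 0" for s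
  proof -
    have "s *\<^sub>R u = (ts s - t0) + (h (ts s) - h t0)" using ts[OF that(1)] t0(3) by (simp add: algebra_simps)
    then have "(1/s) *\<^sub>R (s *\<^sub>R u) = (1/s) *\<^sub>R ((ts s - t0) + (h (ts s) - h t0))" by simp
    then have "u = (1/s) *\<^sub>R ((ts s - t0) + (h (ts s) - h t0))" using that(2) by simp
    then have eq: "u - dec s = (1/s) *\<^sub>R (h (ts s) - h t0)" unfolding dec_def by (simp add: algebra_simps)
    have mem: "ts s \<in> T" "h (ts s) \<in> T'" "h t0 \<in> T'" using ts[OF that(1)] t0 hT by auto
    show "u - dec s \<in> T'" unfolding eq by (rule csubspace_scaleR[OF T(2) csubspace_diff[OF T(2) mem(2,3)]])
    show "dec s \<in> T" unfolding dec_def by (rule csubspace_scaleR[OF T(1) csubspace_diff[OF T(1) mem(1) t0(1)]])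
  qed
  define \<tau> where "\<tau> = dec (\<delta> / 2)"
  have "\<bar>\<delta> / 2\<bar> < \<delta>" "\<delta> / 2 \<noteq> 0" using \<delta>_pos by auto
  note \<tau> = dec[OF this, folded \<tau>_def]
  have "h (t0 + s *\<^sub>R \<tau>) = h t0 + s *\<^sub>R (u - \<tau>)" if "\<bar>s\<bar> < \<delta>" for s
  proof (cases "s = 0")
    case False
    have "(1/s) *\<^sub>R (ts s - t0) = \<tau>"
      using csubspace_decomposition_unique[OF T dec(1)[OF that False] \<tau>(1) dec(2)[OF that False] \<tau>(2)] unfolding dec_def .
    then have "s *\<^sub>R ((1/s) *\<^sub>R (ts s - t0)) = s *\<^sub>R \<tau>" by simp
    then have "ts s = t0 + s *\<^sub>R \<tau>" using False by (simp add: algebra_simps)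
    then show ?thesis using ts[OF that] t0(3) by (simp add: algebra_simps)
  qed simp
  with \<delta>_pos \<tau>(1) that show ?thesis by blast
qed

lemma graph_tangent:
  fixes h :: "'n::finite frame \<Rightarrow> 'n frame"
  assumes U: "open U" "y \<in> U" and T: "csubspace T" "csubspace T'" "T \<inter> T' = {0}"
    and hT: "\<forall>t\<in>T \<inter> W. h t \<in> T'" and SU: "S \<inter> U = {t + h t |t. t \<in> T \<inter> W} \<inter> U"
    and t0: "t0 \<in> T" "t0 \<in> W" "y = t0 + h t0" and L: "(h has_derivative L) (at t0)"
    and line: "\<And>s::real. y + s *\<^sub>R u \<in> S"
  obtains \<tau> where "\<tau> \<in> T" "u = \<tau> + L \<tau>"
proof -
  obtain \<delta> \<tau> where \<delta>: "\<delta> > 0" "\<tau> \<in> T" "\<And>s. \<bar>s\<bar> < \<delta> \<Longrightarrow> h (t0 + s *\<^sub>R \<tau>) = h t0 + s *\<^sub>R (u - \<tau>)"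
    using graph_line_affine[OF U T hT SU t0 line] by blast
  have "((\<lambda>s. h t0 + s *\<^sub>R (u - \<tau>)) has_vector_derivative (u - \<tau>)) (at 0)"
    by (auto intro!: derivative_eq_intros)
  then have "((\<lambda>s. h (t0 + s *\<^sub>R \<tau>)) has_vector_derivative (u - \<tau>)) (at 0)"
    by (rule has_vector_derivative_transform_within_open[of _ _ _ "ball 0 \<delta>"]) (use \<delta> in auto)
  then have "L \<tau> = u - \<tau>" using vector_derivative_unique_at[OF has_vector_derivative_along_line[OF L]] by blast
  with \<delta>(2) that show ?thesis by simp
qed

lemma graph_curve_in:
  fixes h :: "'n::finite frame \<Rightarrow> 'n frame"
  assumes U: "open U" "y \<in> U" and W: "open W" and T: "csubspace T"
    and SU: "S \<inter> U = {t + h t |t. t \<in> T \<inter> W} \<inter> U"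
    and t0: "t0 \<in> T" "t0 \<in> W" "y = t0 + h t0" and \<tau>: "\<tau> \<in> T"
    and cont: "isCont (\<lambda>s::real. (t0 + s *\<^sub>R \<tau>) + h (t0 + s *\<^sub>R \<tau>)) 0"
  shows "\<exists>\<delta>>0. \<forall>s. \<bar>s\<bar> < \<delta> \<longrightarrow> (t0 + s *\<^sub>R \<tau>) + h (t0 + s *\<^sub>R \<tau>) \<in> S"
proof -
  from isCont_obtain_interval[OF cont U(1)] U(2) t0(3)
  obtain \<delta>1 where \<delta>1: "\<delta>1 > 0" "\<And>s. \<bar>s\<bar> < \<delta>1 \<Longrightarrow> (t0 + s *\<^sub>R \<tau>) + h (t0 + s *\<^sub>R \<tau>) \<in> U"
    by auto
  have "isCont (\<lambda>s::real. t0 + s *\<^sub>R \<tau>) 0" by (intro continuous_intros)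
  from isCont_obtain_interval[OF this W] t0(2)
  obtain \<delta>2 where \<delta>2: "\<delta>2 > 0" "\<And>s. \<bar>s\<bar> < \<delta>2 \<Longrightarrow> t0 + s *\<^sub>R \<tau> \<in> W"
    by auto
  have "(t0 + s *\<^sub>R \<tau>) + h (t0 + s *\<^sub>R \<tau>) \<in> S" if "\<bar>s\<bar> < min \<delta>1 \<delta>2" for s
  proof -
    have "t0 + s *\<^sub>R \<tau> \<in> T" using t0 \<tau> T by (auto intro: csubspace_add csubspace_scaleR)
    moreover have "(t0 + s *\<^sub>R \<tau>) + h (t0 + s *\<^sub>R \<tau>) \<in> U" "t0 + s *\<^sub>R \<tau> \<in> W"
      using \<delta>1(2)[of s] \<delta>2(2)[of s] that by simp_all
    ultimately show ?thesis using SU by blast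
  qed
  then show ?thesis using \<delta>1(1) \<delta>2(1) by (intro exI[of _ "min \<delta>1 \<delta>2"]) auto
qed

lemma tendsto_difference_quotient:
  fixes \<gamma> :: "real \<Rightarrow> 'a::real_normed_vector"
  assumes "(\<gamma> has_vector_derivative v) (at 0)"
  shows "((\<lambda>s. (1/s) *\<^sub>R (\<gamma> s - \<gamma> 0)) \<longlongrightarrow> v) (at 0)"
proof -
  have "((\<lambda>h. norm (\<gamma> (0 + h) - \<gamma> 0 - h *\<^sub>R v) / norm h) \<longlongrightarrow> 0) (at 0)"
    using assms unfolding has_vector_derivative_def has_derivative_at by blast
  moreover have "\<forall>\<^sub>F h in at (0::real). norm (\<gamma> (0 + h) - \<gamma> 0 - h *\<^sub>R v) / norm h
      = norm ((1/h) *\<^sub>R (\<gamma> h - \<gamma> 0) - v)"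
  proof (rule eventually_at_filter[THEN iffD2], rule always_eventually, intro allI impI)
    fix h :: real assume "h \<noteq> 0"
    then have "(1/h) *\<^sub>R (\<gamma> h - \<gamma> 0) - v = (1/h) *\<^sub>R (\<gamma> h - \<gamma> 0 - h *\<^sub>R v)" by (simp add: algebra_simps)
    then show "norm (\<gamma> (0 + h) - \<gamma> 0 - h *\<^sub>R v) / norm h = norm ((1/h) *\<^sub>R (\<gamma> h - \<gamma> 0) - v)"
      by (simp add: divide_inverse_commute)
  qed
  ultimately have "((\<lambda>h. norm ((1/h) *\<^sub>R (\<gamma> h - \<gamma> 0) - v)) \<longlongrightarrow> 0) (at 0)"
    by (rule Lim_transform_eventually)
  then show ?thesis by (simp add: tendsto_norm_zero_iff LIM_zero_cancel)
qed

lemma quadratic_obstruction: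
  fixes \<gamma> :: "real \<Rightarrow> 'a::real_normed_vector" and G Q K :: "'a \<Rightarrow> complex"
  assumes \<gamma>: "(\<gamma> has_vector_derivative v) (at 0)" "\<gamma> 0 = y"
    and van: "\<exists>\<delta>>0. \<forall>s. \<bar>s\<bar> < \<delta> \<longrightarrow> G (\<gamma> s) = 0"
    and expansion: "\<And>d. G (y + d) = Q d + K d"
    and hom: "\<And>r d. Q (r *\<^sub>R d) = (of_real r)^2 * Q d" "\<And>r d. K (r *\<^sub>R d) = (of_real r)^3 * K d"
    and cont: "continuous_on UNIV Q" "continuous_on UNIV K"
  shows "Q v = 0"
proof -
  define \<phi> where "\<phi> s = (1/s) *\<^sub>R (\<gamma> s - y)" for s
  have \<phi>: "(\<phi> \<longlongrightarrow> v) (at 0)" unfolding \<phi>_def using tendsto_difference_quotient[OF \<gamma>(1)] \<gamma>(2) by simp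
  have "isCont Q v" "isCont K v" using cont by (simp_all add: continuous_on_eq_continuous_at)
  then have "((\<lambda>s. Q (\<phi> s) + of_real s * K (\<phi> s)) \<longlongrightarrow> Q v + of_real 0 * K v) (at 0)"
    by (intro tendsto_intros isCont_tendsto_compose[OF _ \<phi>])
  then have lim: "((\<lambda>s. Q (\<phi> s) + of_real s * K (\<phi> s)) \<longlongrightarrow> Q v) (at 0)" by simp
  obtain \<delta> where \<delta>: "\<delta> > 0" "\<And>s. \<bar>s\<bar> < \<delta> \<Longrightarrow> G (\<gamma> s) = 0" using van by blast
  have "\<forall>\<^sub>F s in at (0::real). s \<noteq> 0 \<and> \<bar>s\<bar> < \<delta>"
    using \<delta>(1) by (auto simp: eventually_at intro!: exI[of _ \<delta>])
  then have "\<forall>\<^sub>F s in at (0::real). Q (\<phi> s) + of_real s * K (\<phi> s) = 0"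
  proof (rule eventually_mono)
    fix s :: real assume s: "s \<noteq> 0 \<and> \<bar>s\<bar> < \<delta>"
    then have "\<gamma> s = y + s *\<^sub>R \<phi> s" unfolding \<phi>_def by simp
    then have "0 = Q (s *\<^sub>R \<phi> s) + K (s *\<^sub>R \<phi> s)" using \<delta>(2)[of s] s expansion[of "s *\<^sub>R \<phi> s"] by simp
    also have "\<dots> = (of_real s)^2 * (Q (\<phi> s) + of_real s * K (\<phi> s))"
      using hom by (simp add: algebra_simps power2_eq_square power3_eq_cube)
    finally show "Q (\<phi> s) + of_real s * K (\<phi> s) = 0" using s by simp
  qed
  then have "((\<lambda>s. Q (\<phi> s) + of_real s * K (\<phi> s)) \<longlongrightarrow> 0) (at 0)" by (rule tendsto_eventually)
  with lim show "Q v = 0" using tendsto_unique[OF at_neq_bot] by blast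
qed

text \<open>In a complex submanifold the sum \<open>u + w\<close> of two directions of lines through \<open>y\<close> is tangent, hence the
  velocity of a curve in the set.\<close>
lemma not_complex_submanifold_at_quadratic:
  fixes S :: "'n::finite frame set" and G Q K :: "'n frame \<Rightarrow> complex"
  assumes y: "y \<in> S"
    and lines: "\<And>r::real. y + r *\<^sub>R u \<in> S" "\<And>r::real. y + r *\<^sub>R w \<in> S"
    and G: "\<And>z. z \<in> S \<Longrightarrow> G z = 0" "\<And>d. G (y + d) = Q d + K d"
    and hom: "\<And>r d. Q (r *\<^sub>R d) = (of_real r)^2 * Q d" "\<And>r d. K (r *\<^sub>R d) = (of_real r)^3 * K d"
    and cont: "continuous_on UNIV Q" "continuous_on UNIV K"
    and Q: "Q (u + w) \<noteq> 0"
  shows "\<not> complex_submanifold_at S y"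
proof
  assume "complex_submanifold_at S y"
  then obtain U W T T' h where sm: "open U" "y \<in> U" "open W" "csubspace T" "csubspace T'" "T \<inter> T' = {0}"
    "holomorphic_map_on h W" "\<forall>t\<in>T \<inter> W. h t \<in> T'" "S \<inter> U = {t + h t |t. t \<in> T \<inter> W} \<inter> U"
    unfolding complex_submanifold_at_def by blast
  obtain t0 where t0: "t0 \<in> T" "t0 \<in> W" "y = t0 + h t0" using sm(2,9) y by blast
  obtain L where L: "(h has_derivative L) (at t0)" using sm(7) t0(2) unfolding holomorphic_map_on_def by blast
  obtain \<tau>u \<tau>w where \<tau>: "\<tau>u \<in> T" "u = \<tau>u + L \<tau>u" "\<tau>w \<in> T" "w = \<tau>w + L \<tau>w"
    using graph_tangent[OF sm(1,2,4,5,6,8,9) t0 L lines(1)] graph_tangent[OF sm(1,2,4,5,6,8,9) t0 L lines(2)]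
    by metis
  define \<tau> where "\<tau> = \<tau>u + \<tau>w"
  define \<gamma> where "\<gamma> s = (t0 + s *\<^sub>R \<tau>) + h (t0 + s *\<^sub>R \<tau>)" for s :: real
  have "((\<lambda>s::real. t0 + s *\<^sub>R \<tau>) has_vector_derivative \<tau>) (at 0)"
    by (auto intro!: derivative_eq_intros)
  from has_vector_derivative_add[OF this has_vector_derivative_along_line[OF L]]
  have "(\<gamma> has_vector_derivative \<tau> + L \<tau>) (at 0)" unfolding \<gamma>_def .
  moreover have "\<tau> + L \<tau> = u + w"
    using \<tau> linear_add[OF has_derivative_linear[OF L]] unfolding \<tau>_def by (simp add: algebra_simps)
  ultimately have \<gamma>': "(\<gamma> has_vector_derivative u + w) (at 0)" by simp
  have "\<exists>\<delta>>0. \<forall>s. \<bar>s\<bar> < \<delta> \<longrightarrow> \<gamma> s \<in> S"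
    using graph_curve_in[OF sm(1,2,3,4,9) t0 csubspace_add[OF sm(4) \<tau>(1,3), folded \<tau>_def]]
      has_vector_derivative_continuous[OF \<gamma>'] unfolding \<gamma>_def by blast
  then have "\<exists>\<delta>>0. \<forall>s. \<bar>s\<bar> < \<delta> \<longrightarrow> G (\<gamma> s) = 0" using G(1) by metis
  moreover have "\<gamma> 0 = y" using t0(3) by (simp add: \<gamma>_def)
  ultimately have "Q (u + w) = 0" using quadratic_obstruction[OF \<gamma>' _ _ G(2) hom cont] by blast
  with Q show False by simp
qed

lemma scaleR_frame_nth: "(r *\<^sub>R z) $ m = of_real r *s (z $ m :: complex^'n::finite)"
proof -
  have "(r *\<^sub>R z) $ m = r *\<^sub>R (z $ m)" by simp
  also have "\<dots> = of_real r *s (z $ m)" by (simp add: vec_eq_iff) (simp add: scaleR_conv_of_real)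
  finally show ?thesis .
qed

locale degenerate_frame =
  fixes y :: "'n::finite frame" and \<kappa>2 \<kappa>3 \<mu>2 \<mu>3 \<alpha>2 \<beta>2 :: complex and e d :: "complex^'n" and p q s :: 'n
  assumes incident_y: "incident 0 1 2 3 4 5 6 7 8 y"
    and vertices: "y$1 = \<kappa>2 *s y$0" "y$2 = \<kappa>3 *s y$0"
    and same_sides: "span2 (y$3) (y$4) = span2 (y$5) (y$6)" "span2 (y$5) (y$6) = span2 (y$7) (y$8)"
    and side_dets: "\<And>x. det3 p q s x (y$5) (y$6) = \<mu>2 * det3 p q s x (y$3) (y$4)"
      "\<And>x. det3 p q s x (y$7) (y$8) = \<mu>3 * det3 p q s x (y$3) (y$4)"
    and nonzero: "\<kappa>2 \<noteq> 0" "\<kappa>3 \<noteq> 0" "\<mu>2 \<noteq> 0" "\<mu>3 \<noteq> 0"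
    and vertex_on_side: "y$0 = \<alpha>2 *s y$5 + \<beta>2 *s y$6"
    and e_on_side: "e \<in> span2 (y$3) (y$4)"
    and d_in_plane: "d \<in> span3 (y$9) (y$10) (y$11)"
    and det3_edv: "det3 p q s e d (y$0) \<noteq> 0"
begin

text \<open>The directions of two lines of frames over degenerate triangles: \<open>u\<close> moves the first vertex along
  the common side, \<open>w\<close> turns the second side about the first vertex, out of the common line.\<close>
definition u :: "'n frame" where
  "u = (\<chi> m. if m = 0 then e else 0)"

definition w :: "'n frame" where
  "w = (\<chi> m. if m = 5 then \<beta>2 *s d else if m = 6 then (- \<alpha>2) *s d else 0)"

text \<open>Each \<open>det3\<close> term below vanishes when a vertex lies on a side; the coefficients make the linear part
  at \<open>y\<close> of the combination cancel.\<close>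
definition side_terms :: "(12 \<Rightarrow> 12 \<Rightarrow> 12 \<Rightarrow> complex) \<Rightarrow> complex" where
  "side_terms f = f 0 5 6 / \<mu>2 - f 0 7 8 / \<mu>3 - f 1 3 4 / \<kappa>2 + f 1 7 8 / (\<kappa>2 * \<mu>3)
     + f 2 3 4 / \<kappa>3 - f 2 5 6 / (\<kappa>3 * \<mu>2)"

definition G :: "'n frame \<Rightarrow> complex" where
  "G z = side_terms (\<lambda>i a b. det3 p q s (z$i) (z$a) (z$b))"

definition Q :: "'n frame \<Rightarrow> complex" where
  "Q z = side_terms (\<lambda>i a b. det3 p q s (z$i) (z$a) (y$b) + det3 p q s (z$i) (y$a) (z$b)
     + det3 p q s (y$i) (z$a) (z$b))"

lemma side_terms_add: "side_terms (\<lambda>i a b. f i a b + g i a b) = side_terms f + side_terms g"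
  unfolding side_terms_def by (simp add: add_divide_distrib algebra_simps)

lemma G_vanishes: "z \<in> frame_preimage \<Longrightarrow> G z = 0"
  unfolding frame_preimage_iff_incident incident_def G_def side_terms_def by (simp add: det3_span2_zero)

lemma linear_part_zero:
  "side_terms (\<lambda>i a b. det3 p q s (z$i) (y$a) (y$b)) + side_terms (\<lambda>i a b. det3 p q s (y$i) (z$a) (y$b))
     + side_terms (\<lambda>i a b. det3 p q s (y$i) (y$a) (z$b)) = 0"
  unfolding side_terms_def side_dets vertices det3_scale1 using nonzero by (simp add: field_simps)

lemma G_expansion: "G (y + z) = Q z + G z"
proof -
  have "G y = 0" using G_vanishes incident_y frame_preimage_iff_incident by blast
  with linear_part_zero[of z] show ?thesis
    unfolding G_def Q_def vector_add_component det3_expand side_terms_add by (simp add: algebra_simps)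
qed

lemma Q_scaleR: "Q (r *\<^sub>R z) = (of_real r)^2 * Q z"
  unfolding Q_def side_terms_def scaleR_frame_nth det3_scale1 det3_scale2 det3_scale3
  by (simp add: algebra_simps power2_eq_square)

lemma G_scaleR: "G (r *\<^sub>R z) = (of_real r)^3 * G z"
  unfolding G_def side_terms_def scaleR_frame_nth det3_scale1 det3_scale2 det3_scale3
  by (simp add: algebra_simps power3_eq_cube)

lemma continuous_on_Q: "continuous_on UNIV Q" and continuous_on_G: "continuous_on UNIV G"
proof -
  have "holo_on UNIV Q" "holo_on UNIV G"
    unfolding Q_def G_def side_terms_def using nonzero
    by (intro holo_on_add holo_on_diff holo_on_divide holo_on_det3; simp)+
  then show "continuous_on UNIV Q" "continuous_on UNIV G" by (simp_all add: holo_on_imp_continuous_on)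
qed

lemma Q_nonzero: "Q (u + w) \<noteq> 0"
proof -
  have "Q (u + w) = (det3 p q s e (\<beta>2 *s d) (y$6) + det3 p q s e (y$5) ((- \<alpha>2) *s d)) / \<mu>2"
    unfolding Q_def side_terms_def u_def w_def by (simp add: det3_multilinear)
  also have "\<dots> = det3 p q s e d (y$0) / \<mu>2"
    unfolding vertex_on_side using det3_swap23[of p q s e "y$5" d] by (simp add: det3_multilinear algebra_simps)
  finally show ?thesis using det3_edv nonzero by simp
qed

lemma line_u: "y + r *\<^sub>R u \<in> frame_preimage"
proof -
  have e: "r *\<^sub>R e = of_real r *s e" by (simp add: vec_eq_iff) (simp add: scaleR_conv_of_real)
  have "det3 p q s e d (y$0 + r *\<^sub>R e) = det3 p q s e d (y$0)" unfolding e by (simp add: det3_multilinear)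
  then have "y$0 + r *\<^sub>R e \<noteq> 0" using det3_edv by auto
  moreover have "y$0 + r *\<^sub>R e \<in> span2 (y$3) (y$4)"
    using incident_y e_on_side same_sides unfolding incident_def e by (simp add: vec.span_add vec.span_scale)
  ultimately show ?thesis
    using incident_y same_sides unfolding frame_preimage_iff_incident incident_def u_def by simp
qed

lemma line_w: "y + r *\<^sub>R w \<in> frame_preimage"
proof -
  define a where "a = y$5 + r *\<^sub>R (\<beta>2 *s d)"
  define b where "b = y$6 - r *\<^sub>R (\<alpha>2 *s d)"
  have frame: "(y + r *\<^sub>R w) $ m = (if m = 5 then a else if m = 6 then b else y $ m)" for m
    unfolding w_def a_def b_def by simp
  have a: "a = y$5 + (of_real r * \<beta>2) *s d" unfolding a_def by (simp add: vec_eq_iff) (simp add: scaleR_conv_of_real)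
  have b: "b = y$6 - (of_real r * \<alpha>2) *s d" unfolding b_def by (simp add: vec_eq_iff) (simp add: scaleR_conv_of_real)
  have "det3 p q s d a b = \<mu>2 * det3 p q s d (y$3) (y$4)"
    unfolding a b using side_dets(1) by (simp add: det3_multilinear)
  moreover have "det3 p q s d (y$3) (y$4) \<noteq> 0"
  proof -
    have "indep2 e (y$0)" using det3_edv det3_swap12 indep3_of_det3_nonzero indep3_imp_indep2 by (metis neg_equal_0_iff_equal)
    moreover have "y$0 \<in> span2 (y$3) (y$4)" using incident_y same_sides unfolding incident_def by simp
    ultimately obtain \<mu> where "det3 p q s d e (y$0) = \<mu> * det3 p q s d (y$3) (y$4)"
      using det3_basis_change[OF e_on_side] by metis
    then show ?thesis using det3_edv det3_swap12[of p q s e d] by auto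
  qed
  ultimately have "indep2 a b"
    using nonzero indep3_of_det3_nonzero indep3_imp_indep2 by (metis mult_eq_0_iff)
  moreover have "y$0 = \<alpha>2 *s a + \<beta>2 *s b" "y$2 = (\<kappa>3 * \<alpha>2) *s a + (\<kappa>3 * \<beta>2) *s b"
    using vertex_on_side vertices(2) by (simp_all add: a b vec_eq_iff algebra_simps)
  then have "y$0 \<in> span2 a b" "y$2 \<in> span2 a b" unfolding span2_iff by blast+
  moreover have "a \<in> span3 (y$9) (y$10) (y$11)" "b \<in> span3 (y$9) (y$10) (y$11)"
    using incident_y d_in_plane unfolding incident_def a b by (simp_all add: vec.span_add vec.span_diff vec.span_scale)
  ultimately show ?thesis
    using incident_y unfolding frame_preimage_iff_incident incident_def frame by simp
qed

theorem not_complex_submanifold_at: "\<not> complex_submanifold_at frame_preimage y"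
proof (rule not_complex_submanifold_at_quadratic[where K = G])
  show "y \<in> frame_preimage" using incident_y by (simp add: frame_preimage_iff_incident)
  show "y + r *\<^sub>R u \<in> frame_preimage" "y + r *\<^sub>R w \<in> frame_preimage" for r
    by (rule line_u line_w)+
  show "G z = 0" if "z \<in> frame_preimage" for z using G_vanishes[OF that] .
  show "G (y + d) = Q d + G d" for d by (rule G_expansion)
  show "Q (r *\<^sub>R d) = (of_real r)^2 * Q d" "G (r *\<^sub>R d) = (of_real r)^3 * G d" for r d
    by (rule Q_scaleR G_scaleR)+
qed (rule continuous_on_Q continuous_on_G Q_nonzero)+

end

lemma not_complex_submanifold_at_degenerate:
  fixes y :: "'n::finite frame"
  assumes y: "y \<in> frame_preimage"
    and vertices: "vec.span {y$0} = vec.span {y$1}" "vec.span {y$1} = vec.span {y$2}"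
    and sides: "span2 (y$3) (y$4) = span2 (y$5) (y$6)" "span2 (y$5) (y$6) = span2 (y$7) (y$8)"
  shows "\<not> complex_submanifold_at frame_preimage y"
proof -
  have inc: "incident 0 1 2 3 4 5 6 7 8 y" using y frame_preimage_iff_incident by blast
  then have nz: "y$0 \<noteq> 0" "y$1 \<noteq> 0" "y$2 \<noteq> 0" and indep: "indep2 (y$3) (y$4)" "indep2 (y$5) (y$6)"
    "indep2 (y$7) (y$8)" "indep3 (y$9) (y$10) (y$11)"
    unfolding incident_def by simp_all
  have "y$1 \<in> vec.span {y$0}" "y$2 \<in> vec.span {y$0}"
    using vertices vec.span_base[of "y$1" "{y$1}"] vec.span_base[of "y$2" "{y$2}"] by auto
  then obtain \<kappa>2 \<kappa>3 where \<kappa>: "y$1 = \<kappa>2 *s y$0" "y$2 = \<kappa>3 *s y$0"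
    unfolding span_singleton_iff by blast
  have "y$0 \<in> span2 (y$3) (y$4)" "y$5 \<in> span2 (y$3) (y$4)" "y$6 \<in> span2 (y$3) (y$4)"
    "y$7 \<in> span2 (y$3) (y$4)" "y$8 \<in> span2 (y$3) (y$4)"
    using inc sides by (auto simp: incident_def intro: vec.span_base)
  moreover from this(1) obtain e where e: "e \<in> span2 (y$3) (y$4)" "indep2 e (y$0)"
    using indep2_exchange[OF _ nz(1) indep(1)] by (metis insertCI vec.span_base)
  moreover obtain d p q s where "d \<in> span3 (y$9) (y$10) (y$11)" "det3 p q s e d (y$0) \<noteq> 0"
    using obtain_det3_complement[OF e(2) indep(4)] .
  moreover obtain \<mu>2 \<mu>3 where "\<mu>2 \<noteq> 0" "\<And>x. det3 p q s x (y$5) (y$6) = \<mu>2 * det3 p q s x (y$3) (y$4)"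
    "\<mu>3 \<noteq> 0" "\<And>x. det3 p q s x (y$7) (y$8) = \<mu>3 * det3 p q s x (y$3) (y$4)"
    using det3_basis_change[of "y$5" "y$3" "y$4" "y$6"] det3_basis_change[of "y$7" "y$3" "y$4" "y$8"]
      calculation(2-5) indep(2,3) by metis
  moreover obtain \<alpha>2 \<beta>2 where "y$0 = \<alpha>2 *s y$5 + \<beta>2 *s y$6"
    using inc unfolding incident_def span2_iff by blast
  moreover have "\<kappa>2 \<noteq> 0" "\<kappa>3 \<noteq> 0" using \<kappa> nz by auto
  ultimately interpret degenerate_frame y \<kappa>2 \<kappa>3 \<mu>2 \<mu>3 \<alpha>2 \<beta>2 e d p q s
    using inc \<kappa> sides by unfold_locales simp_all
  show ?thesis by (rule not_complex_submanifold_at)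
qed

section \<open>The singular locus\<close>

lemma frame_preimage_eq_incident:
  "frame_preimage = {z. incident 0 1 2 3 4 5 6 7 8 z}"
  "frame_preimage = {z. incident 1 2 0 5 6 7 8 3 4 z}"
  "frame_preimage = {z. incident 2 0 1 7 8 3 4 5 6 z}"
  using frame_preimage_iff_incident incident_rotate[of 0 1 2 3 4 5 6 7 8]
    incident_rotate[of 1 2 0 5 6 7 8 3 4] by auto

lemma frame_preimage_proj_surj:
  assumes "x \<in> (triangle_space :: 'n::finite triangle set)"
  obtains y where "y \<in> frame_preimage" "frame_proj y = x"
proof -
  obtain p1 p2 p3 l1 l2 l3 P where x: "x = (p1, p2, p3, l1, l2, l3, P)" by (metis prod.exhaust)
  have "p1 \<in> Grass 1" "p2 \<in> Grass 1" "p3 \<in> Grass 1" "l1 \<in> Grass 2" "l2 \<in> Grass 2" "l3 \<in> Grass 2" "P \<in> Grass 3"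
    using assms unfolding x triangle_space_def by auto
  then obtain x0 x1 x2 x3 x4 x5 x6 x7 x8 x9 x10 x11 :: "complex^'n" where
    "x0 \<noteq> 0" "p1 = vec.span {x0}" "x1 \<noteq> 0" "p2 = vec.span {x1}" "x2 \<noteq> 0" "p3 = vec.span {x2}"
    "indep2 x3 x4" "l1 = span2 x3 x4" "indep2 x5 x6" "l2 = span2 x5 x6" "indep2 x7 x8" "l3 = span2 x7 x8"
    "indep3 x9 x10 x11" "P = span3 x9 x10 x11"
    by (metis Grass_1_E Grass_2_E Grass_3_E)
  moreover define y :: "'n frame" where "y = (\<chi> m. if m = 0 then x0 else if m = 1 then x1 else if m = 2 then x2
     else if m = 3 then x3 else if m = 4 then x4 else if m = 5 then x5 else if m = 6 then x6 else if m = 7 then x7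
     else if m = 8 then x8 else if m = 9 then x9 else if m = 10 then x10 else x11)"
  ultimately have "frame_proj y = x" "y \<in> frame_dom"
    unfolding x frame_proj_def frame_dom_iff by (simp_all add: y_def)
  with assms that show ?thesis unfolding frame_preimage_def by simp
qed

lemma complex_submanifold_at_nondegenerate:
  fixes y :: "'n::finite frame"
  assumes y: "y \<in> frame_preimage"
    and nondegenerate: "\<not> (vec.span {y$0} = vec.span {y$1} \<and> vec.span {y$1} = vec.span {y$2} \<and>
      span2 (y$3) (y$4) = span2 (y$5) (y$6) \<and> span2 (y$5) (y$6) = span2 (y$7) (y$8))"
  shows "complex_submanifold_at frame_preimage y"
proof -
  note eqs = frame_preimage_eq_incident
  have labels: "distinct [0::12, 1, 2, 3, 4, 5, 6, 7, 8, 9, 10, 11]" "distinct [1::12, 2, 0, 5, 6, 7, 8, 3, 4, 9, 10, 11]"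
    "distinct [2::12, 0, 1, 7, 8, 3, 4, 5, 6, 9, 10, 11]"
    by simp_all
  consider "vec.span {y$2} \<noteq> vec.span {y$0}" "vec.span {y$2} \<noteq> vec.span {y$1}"
    | "vec.span {y$0} \<noteq> vec.span {y$1}" "vec.span {y$0} \<noteq> vec.span {y$2}"
    | "vec.span {y$1} \<noteq> vec.span {y$2}" "vec.span {y$1} \<noteq> vec.span {y$0}"
    | "span2 (y$7) (y$8) \<noteq> span2 (y$3) (y$4)" "span2 (y$7) (y$8) \<noteq> span2 (y$5) (y$6)"
    | "span2 (y$3) (y$4) \<noteq> span2 (y$5) (y$6)" "span2 (y$3) (y$4) \<noteq> span2 (y$7) (y$8)"
    | "span2 (y$5) (y$6) \<noteq> span2 (y$3) (y$4)" "span2 (y$5) (y$6) \<noteq> span2 (y$7) (y$8)"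
    using nondegenerate by metis
  then show ?thesis
    using complex_submanifold_at_vertex_chart[OF labels(1) eqs(1) y] complex_submanifold_at_side_chart[OF labels(1) eqs(1) y]
      complex_submanifold_at_vertex_chart[OF labels(2) eqs(2) y] complex_submanifold_at_side_chart[OF labels(2) eqs(2) y]
      complex_submanifold_at_vertex_chart[OF labels(3) eqs(3) y] complex_submanifold_at_side_chart[OF labels(3) eqs(3) y]
    by cases simp_all
qed

theorem lemma2p7:
  assumes "CARD('n::finite) \<ge> 3"
  shows "(singular_locus :: 'n triangle set) =
    {(p1,p2,p3,l1,l2,l3,P) \<in> triangle_space. p1 = p2 \<and> p2 = p3 \<and> l1 = l2 \<and> l2 = l3}"
proof (intro set_eqI iffI)
  fix x :: "'n triangle"
  assume x: "x \<in> singular_locus"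
  then obtain y where y: "y \<in> frame_preimage" "frame_proj y = x"
    using frame_preimage_proj_surj unfolding singular_locus_def by blast
  moreover have "y \<in> frame_dom" using y(1) by (simp add: frame_preimage_def)
  ultimately have "\<not> complex_submanifold_at frame_preimage y"
    using x unfolding singular_locus_def smooth_point_def frame_preimage_def[symmetric] by auto
  then show "x \<in> {(p1,p2,p3,l1,l2,l3,P) \<in> triangle_space. p1 = p2 \<and> p2 = p3 \<and> l1 = l2 \<and> l2 = l3}"
    using x y complex_submanifold_at_nondegenerate[OF y(1)]
    unfolding singular_locus_def frame_proj_def by auto
next
  fix x :: "'n triangle"
  assume x: "x \<in> {(p1,p2,p3,l1,l2,l3,P) \<in> triangle_space. p1 = p2 \<and> p2 = p3 \<and> l1 = l2 \<and> l2 = l3}"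
  have "\<not> complex_submanifold_at frame_preimage y" if "y \<in> frame_dom" "frame_proj y = x" for y
    using not_complex_submanifold_at_degenerate[of y] that x
    unfolding frame_preimage_def frame_proj_def by auto
  with x show "x \<in> singular_locus"
    unfolding singular_locus_def smooth_point_def frame_preimage_def[symmetric] by auto
qed

end
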